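(* Let $(A,B)$ be a Katsura pair with $B\in M_N(\{0,1\})$ such that the KEP-action $(G_B,E_A)$ is regular. Then every connected component of $\mathcal{J}_{G_B,E_A}$ is either a point or a circle. Moreover, let $C$ be the connectivity matrix of $E_A$, let $\pi:E_A^{-\infty}\to E_C^{-\infty}$ and $\pi_{\mathcal J}:\mathcal{J}_{G_B,E_A}\to E_C^{-\infty}$ be the induced factor maps, and for $v\in E_C^{-\infty}$ let $K(v)=-\min\{k<0: B_{v_{k-1},v_k}=0\}$ (so $K(v)=\infty$ if $B_{v_{k-1},v_k}=0$ for infinitely many $k$), with $K(v)=0$ if this set is empty. Then: (1) if $K(v)=\infty$, then $\pi_{\mathcal J}^{-1}(v)$ is homeomorphic to $\pi^{-1}(v)$, and under this identification $\tilde\sigma$ is the shift $\sigma:\pi^{-1}(v)\to\pi^{-1}(\sigma(v))$; (2) if $K(v)=0$ and $\sup_{k<0}A_{v[k,-1]}=\infty$, then $\pi_{\mathcal J}^{-1}(v)$ is homeomorphic to a circle $\mathbb{T}_v=\{z\in\mathbb{C}:|z|=1\}$, and under these identifications $\tilde\sigma$ is $z\mapsto z^n:\mathbb{T}_v\to\mathbb{T}_{\sigma(v)}$ with $n=A_{v_{-2},v_{-1}}$; (3) if $K(v)=0$ and $\sup_{k<0}A_{v[k,-1]}<\infty$, then $\pi_{\mathcal J}^{-1}(v)$ is a single point; (4) if $0<K(v)<\infty$, then writing $K=K(v)$, $\pi_{\mathcal J}^{-1}(v)$ is homeomorphic to $\pi_{\mathcal J}^{-1}(\sigma^{K}(v))\times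 P_v$, where $P_v$ is the finite set of paths $\mu_{-K}\cdots\mu_{-1}$ in $E_A$ lying over the last $K$ edges of $v$, and cases (2) and (3) describe $\pi_{\mathcal J}^{-1}(\sigma^K(v))$; under these identifications $\tilde\sigma$ is $\mathrm{id}\times\sigma:\pi_{\mathcal J}^{-1}(\sigma^K(v))\times P_v\to\pi_{\mathcal J}^{-1}(\sigma^K(v))\times P_{\sigma(v)}$, $(z,\mu_{-K}\cdots\mu_{-1})\mapsto(z,\mu_{-K}\cdots\mu_{-2})$.
   Context: Katsura pair: $N\in\mathbb{N}$, $A\in M_N(\mathbb{N})$ (nonnegative integers), $B\in M_N(\mathbb{Z})$ with $A_{ij}=0\Rightarrow B_{ij}=0$. Graph $E_A$: vertices $\{1,\dots,N\}$, edges $e_{i,j,m}$ for $0\le m<A_{ij}$, $r(e_{i,j,m})=i$, $s(e_{i,j,m})=j$. Finite paths $\mu_1\cdots\mu_n$ with $s(\mu_i)=r(\mu_{i+1})$; $E^{-\infty}$ = left-infinite paths $\cdots\mu_{-2}\mu_{-1}$ with product topology, shift $\sigma(\cdots\mu_{-2}\mu_{-1})=\cdots\mu_{-3}\mu_{-2}$. The group bundle $\mathbb{Z}\times E_A^0$ (elements $a_i^k$, $a_i^ka_i^l=a_i^{k+l}$) acts by $a_i^k\cdot e_{i,j,m}=e_{i,j,\hat m}$, $a_i^k|_{e_{i,j,m}}=a_j^{\hat k}$, where $kB_{ij}+m=\hat kA_{ij}+\hat m$ and $0\le\hat m<A_{ij}$; this extends to finite paths via $g\cdot(e\nu)=(g\cdot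 e)(g|_e\cdot\nu)$, $g|_{e\nu}=(g|_e)|_\nu$. $G_B$ is the quotient by the elements acting trivially; $(G_B,E_A)$ (the KEP-action) is a faithful self-similar groupoid action, with restrictions descending to $G_B$. Regular: for every $g\in G_B$ there is $K\in\mathbb{N}$ such that $g\cdot\mu=\mu$ and $|\mu|\ge K$ imply $g|_\mu$ is the unit at $s(\mu)$. Limit space: $\mu\sim_{ae}\nu$ in $E_A^{-\infty}$ iff there are a finite $F\subseteq G_B$ and $(g_n)_{n<0}\subseteq F$ with $d(g_n)=r(\mu_n)$ and $g_n\cdot\mu_n\cdots\mu_{-1}=\nu_n\cdots\nu_{-1}$ for all $n<0$; $\mathcal{J}_{G_B,E_A}=E_A^{-\infty}/\sim_{ae}$ (quotient topology), $\tilde\sigma$ induced by $\sigma$. Connectivity matrix: $C_{ij}=1$ if $A_{ij}>0$ and $0$ otherwise; $E_C$ is its graph (one edge $i\to j$ from range $i$ to source $j$ whenever $A_{ij}>0$). $\pi$ sends each edge $e_{i,j,m}$ to the edge of $E_C$ with range $i$ and source $j$; since the action preserves ranges and sources of edges, $\pi$ descends to $\pi_{\mathcal J}$. For $v=\cdots f_{-2}f_{-1}\in E_C^{-\infty}$ write $v_k=s(f_k)$ for $k\le-1$, so $r(f_k)=v_{k-1}$, and $A_{v[k,-1]}=\prod_{j=k}^{-1}A_{v_{j-1},v_j}$. *)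

theory Defs
  imports "HOL-Analysis.Analysis" "HOL-Library.Extended_Nat"
begin

text \<open>Katsura pairs. Vertices are 0..<N (0-based). An edge e_{i,j,m} is the triple (i,j,m);
  its range is i and its source is j.\<close>

type_synonym edge = "nat \<times> nat \<times> nat"
type_synonym grp = "nat \<times> int"  \<comment> \<open>(i,k) represents a_i^k\<close>

definition katsura_pair :: "nat \<Rightarrow> (nat \<Rightarrow> nat \<Rightarrow> nat) \<Rightarrow> (nat \<Rightarrow> nat \<Rightarrow> int) \<Rightarrow> bool" where
  "katsura_pair N A B \<longleftrightarrow> (\<forall>i<N. \<forall>j<N. A i j = 0 \<longrightarrow> B i j = 0)"

definition edges :: "nat \<Rightarrow> (nat \<Rightarrow> nat \<Rightarrow> nat) \<Rightarrow> edge set" where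
  "edges N A = {(i,j,m). i < N \<and> j < N \<and> m < A i j}"

definition er :: "edge \<Rightarrow> nat" where "er e = fst e"
definition es :: "edge \<Rightarrow> nat" where "es e = fst (snd e)"

text \<open>a_i^k . e_{i,j,m} = e_{i,j,mhat}, a_i^k|_{e_{i,j,m}} = a_j^{khat},
  where k B_ij + m = khat A_ij + mhat, 0 \<le> mhat < A_ij.\<close>
definition act_edge :: "(nat \<Rightarrow> nat \<Rightarrow> nat) \<Rightarrow> (nat \<Rightarrow> nat \<Rightarrow> int) \<Rightarrow> grp \<Rightarrow> edge \<Rightarrow> edge" where
  "act_edge A B g e = (case e of (i,j,m) \<Rightarrow>
      (i, j, nat ((snd g * B i j + int m) mod int (A i j))))"

definition restr_edge :: "(nat \<Rightarrow> nat \<Rightarrow> nat) \<Rightarrow> (nat \<Rightarrow> nat \<Rightarrow> int) \<Rightarrow> grp \<Rightarrow> edge \<Rightarrow> grp" where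
  "restr_edge A B g e = (case e of (i,j,m) \<Rightarrow>
      (j, (snd g * B i j + int m) div int (A i j)))"

text \<open>Finite paths are lists [mu_1,...,mu_n] (mu_1 first).\<close>
fun act :: "(nat \<Rightarrow> nat \<Rightarrow> nat) \<Rightarrow> (nat \<Rightarrow> nat \<Rightarrow> int) \<Rightarrow> grp \<Rightarrow> edge list \<Rightarrow> edge list" where
  "act A B g [] = []"
| "act A B g (e # \<mu>) = act_edge A B g e # act A B (restr_edge A B g e) \<mu>"

fun restr :: "(nat \<Rightarrow> nat \<Rightarrow> nat) \<Rightarrow> (nat \<Rightarrow> nat \<Rightarrow> int) \<Rightarrow> grp \<Rightarrow> edge list \<Rightarrow> grp" where
  "restr A B g [] = g"
| "restr A B g (e # \<mu>) = restr A B (restr_edge A B g e) \<mu>"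

fun is_path :: "nat \<Rightarrow> (nat \<Rightarrow> nat \<Rightarrow> nat) \<Rightarrow> nat \<Rightarrow> edge list \<Rightarrow> bool" where
  "is_path N A i [] = (i < N)"
| "is_path N A i (e # \<mu>) = (i < N \<and> e \<in> edges N A \<and> er e = i \<and> is_path N A (es e) \<mu>)"

text \<open>An element a_i^k is the unit of G_B (at i) iff it acts trivially.\<close>
definition trivial_elt :: "nat \<Rightarrow> (nat \<Rightarrow> nat \<Rightarrow> nat) \<Rightarrow> (nat \<Rightarrow> nat \<Rightarrow> int) \<Rightarrow> grp \<Rightarrow> bool" where
  "trivial_elt N A B g \<longleftrightarrow> (\<forall>\<mu>. is_path N A (fst g) \<mu> \<longrightarrow> act A B g \<mu> = \<mu>)"

definition regular :: "nat \<Rightarrow> (nat \<Rightarrow> nat \<Rightarrow> nat) \<Rightarrow> (nat \<Rightarrow> nat \<Rightarrow> int) \<Rightarrow> bool" where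
  "regular N A B \<longleftrightarrow> (\<forall>i<N. \<forall>k. \<exists>K::nat. \<forall>\<mu>.
      is_path N A i \<mu> \<and> act A B (i,k) \<mu> = \<mu> \<and> K \<le> length \<mu>
        \<longrightarrow> trivial_elt N A B (restr A B (i,k) \<mu>))"

text \<open>Left-infinite paths: x n represents mu_{-(n+1)}, so s(mu_{-(n+2)}) = r(mu_{-(n+1)}).\<close>
definition EAinf :: "nat \<Rightarrow> (nat \<Rightarrow> nat \<Rightarrow> nat) \<Rightarrow> (nat \<Rightarrow> edge) set" where
  "EAinf N A = {x. \<forall>n. x n \<in> edges N A \<and> es (x (Suc n)) = er (x n)}"

definition EAtop :: "nat \<Rightarrow> (nat \<Rightarrow> nat \<Rightarrow> nat) \<Rightarrow> (nat \<Rightarrow> edge) topology" where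
  "EAtop N A = subtopology (product_topology (\<lambda>_. discrete_topology (edges N A)) UNIV) (EAinf N A)"

definition shift :: "(nat \<Rightarrow> 'a) \<Rightarrow> (nat \<Rightarrow> 'a)" where
  "shift x = (\<lambda>n. x (Suc n))"

text \<open>finpref x n = mu_{-(n+1)} ... mu_{-1}\<close>
definition finpref :: "(nat \<Rightarrow> 'a) \<Rightarrow> nat \<Rightarrow> 'a list" where
  "finpref x n = rev (map x [0..<Suc n])"

definition ae_rel :: "nat \<Rightarrow> (nat \<Rightarrow> nat \<Rightarrow> nat) \<Rightarrow> (nat \<Rightarrow> nat \<Rightarrow> int) \<Rightarrow> (nat \<Rightarrow> edge) \<Rightarrow> (nat \<Rightarrow> edge) \<Rightarrow> bool" where
  "ae_rel N A B x y \<longleftrightarrow> x \<in> EAinf N A \<and> y \<in> EAinf N A \<and>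
     (\<exists>F::grp set. finite F \<and> (\<exists>gs. \<forall>n. gs n \<in> F \<and> fst (gs n) = er (x n)
         \<and> act A B (gs n) (finpref x n) = finpref y n))"

definition quotient_topology :: "'a topology \<Rightarrow> ('a \<Rightarrow> 'b) \<Rightarrow> 'b topology" where
  "quotient_topology X f = topology (\<lambda>U. U \<subseteq> f ` topspace X \<and> openin X {x \<in> topspace X. f x \<in> U})"

definition aeclass :: "nat \<Rightarrow> (nat \<Rightarrow> nat \<Rightarrow> nat) \<Rightarrow> (nat \<Rightarrow> nat \<Rightarrow> int) \<Rightarrow> (nat \<Rightarrow> edge) \<Rightarrow> (nat \<Rightarrow> edge) set" where
  "aeclass N A B x = {y. ae_rel N A B x y}"

definition limit_space :: "nat \<Rightarrow> (nat \<Rightarrow> nat \<Rightarrow> nat) \<Rightarrow> (nat \<Rightarrow> nat \<Rightarrow> int) \<Rightarrow> (nat \<Rightarrow> edge) set topology" where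
  "limit_space N A B = quotient_topology (EAtop N A) (aeclass N A B)"

definition sigJ :: "nat \<Rightarrow> (nat \<Rightarrow> nat \<Rightarrow> nat) \<Rightarrow> (nat \<Rightarrow> nat \<Rightarrow> int) \<Rightarrow> (nat \<Rightarrow> edge) set \<Rightarrow> (nat \<Rightarrow> edge) set" where
  "sigJ N A B c = aeclass N A B (shift (SOME x. x \<in> c))"

text \<open>Connectivity graph E_C: an edge is the pair (range, source).\<close>
definition ECinf :: "nat \<Rightarrow> (nat \<Rightarrow> nat \<Rightarrow> nat) \<Rightarrow> (nat \<Rightarrow> nat \<times> nat) set" where
  "ECinf N A = {v. \<forall>n. fst (v n) < N \<and> snd (v n) < N \<and> A (fst (v n)) (snd (v n)) > 0
                    \<and> snd (v (Suc n)) = fst (v n)}"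

definition piE :: "(nat \<Rightarrow> edge) \<Rightarrow> (nat \<Rightarrow> nat \<times> nat)" where
  "piE x = (\<lambda>n. (er (x n), es (x n)))"

definition piJ :: "(nat \<Rightarrow> edge) set \<Rightarrow> (nat \<Rightarrow> nat \<times> nat)" where
  "piJ c = piE (SOME x. x \<in> c)"

definition fibreJ :: "nat \<Rightarrow> (nat \<Rightarrow> nat \<Rightarrow> nat) \<Rightarrow> (nat \<Rightarrow> nat \<Rightarrow> int) \<Rightarrow> (nat \<Rightarrow> nat \<times> nat) \<Rightarrow> (nat \<Rightarrow> edge) set topology" where
  "fibreJ N A B v = subtopology (limit_space N A B) {c \<in> topspace (limit_space N A B). piJ c = v}"

definition fibreE :: "nat \<Rightarrow> (nat \<Rightarrow> nat \<Rightarrow> nat) \<Rightarrow> (nat \<Rightarrow> nat \<times> nat) \<Rightarrow> (nat \<Rightarrow> edge) topology" where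
  "fibreE N A v = subtopology (EAtop N A) {x \<in> EAinf N A. piE x = v}"

text \<open>K(v) = - min {k<0 : B_{v_{k-1},v_k} = 0}; the edge f_k = v (-k-1) has range v_{k-1}, source v_k.\<close>
definition Kv :: "(nat \<Rightarrow> nat \<Rightarrow> int) \<Rightarrow> (nat \<Rightarrow> nat \<times> nat) \<Rightarrow> enat" where
  "Kv B v = (let Z = {n. B (fst (v n)) (snd (v n)) = 0} in
     if finite Z then (if Z = {} then 0 else enat (Suc (Max Z))) else \<infinity>)"

definition supA :: "(nat \<Rightarrow> nat \<Rightarrow> nat) \<Rightarrow> (nat \<Rightarrow> nat \<times> nat) \<Rightarrow> enat" where
  "supA A v = (SUP m. enat (\<Prod>n<Suc m. A (fst (v n)) (snd (v n))))"

definition Pv :: "nat \<Rightarrow> (nat \<Rightarrow> nat \<Rightarrow> nat) \<Rightarrow> nat \<Rightarrow> (nat \<Rightarrow> nat \<times> nat) \<Rightarrow> edge list set" where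
  "Pv N A K v = {\<mu>. length \<mu> = K \<and> set \<mu> \<subseteq> edges N A \<and>
                    map (\<lambda>e. (er e, es e)) \<mu> = rev (map v [0..<K])}"

end

theory Submission
  imports Defs
begin

text \<open>
  For \<open>B\<close> with values in \<open>{0, 1}\<close> the action on a finite path is explicit: an edge with
  \<open>B = 0\<close> is fixed and restricts every group element to the unit, while along edges with \<open>B = 1\<close>
  the element \<open>a\<^sup>k\<close> acts as an odometer, adding \<open>k\<close> to the mixed-radix value of the path.
  So inside the fibre of \<open>\<pi>\<close> over \<open>v\<close> the relation \<open>\<sim>\<^sub>a\<^sub>e\<close> can be computed. If \<open>B\<close> vanishes
  infinitely often along \<open>v\<close>, it is equality. If \<open>B \<equiv> 1\<close> along \<open>v\<close>, it identifies all paths when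
  the products of the entries of \<open>A\<close> along \<open>v\<close> are bounded, and otherwise exactly the paths
  whose mixed-radix expansions in \<open>[0, 1]\<close> differ by an integer; the fibre is then a circle, on
  which the shift multiplies the expansion by the entry of \<open>A\<close> at the last edge of \<open>v\<close>. In the
  remaining case the edges up to the last zero of \<open>B\<close> are rigid. The fibres are compact, so the
  continuous bijections onto these Hausdorff models are homeomorphisms; and since \<open>\<pi>\<^sub>J\<close> is
  locally constant, each connected component of the limit space is a component of a single fibre,
  hence a point or a circle.
\<close>

section \<open>Arithmetic of the action on finite paths\<close>

definition edge_ends :: "edge \<Rightarrow> nat \<times> nat" where
  "edge_ends e = (er e, es e)"

definition edge_digit :: "edge \<Rightarrow> int" where
  "edge_digit e = int (snd (snd e))"

text \<open>A path \<open>e\<^sub>1 \<dots> e\<^sub>n\<close> is read as a mixed-radix numeral with least significant digit \<open>e\<^sub>1\<close>: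
  its value is \<open>m\<^sub>1 + A\<^sub>1 (m\<^sub>2 + A\<^sub>2 (\<dots>))\<close>, and its weight \<open>A\<^sub>1 \<cdots> A\<^sub>n\<close> bounds the value.\<close>

fun path_value :: "(nat \<Rightarrow> nat \<Rightarrow> nat) \<Rightarrow> edge list \<Rightarrow> int" where
  "path_value A [] = 0"
| "path_value A (e # \<mu>) = edge_digit e + int (A (er e) (es e)) * path_value A \<mu>"

fun path_weight :: "(nat \<Rightarrow> nat \<Rightarrow> nat) \<Rightarrow> edge list \<Rightarrow> nat" where
  "path_weight A [] = 1"
| "path_weight A (e # \<mu>) = A (er e) (es e) * path_weight A \<mu>"

lemma edge_weight_pos: "e \<in> edges N A \<Longrightarrow> 0 < A (er e) (es e)"
  by (cases e) (auto simp: edges_def er_def es_def)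

lemma length_act [simp]: "length (act A B g \<mu>) = length \<mu>"
  by (induction \<mu> arbitrary: g) auto

lemma map_edge_ends_act: "map edge_ends (act A B g \<mu>) = map edge_ends \<mu>"
  by (induction \<mu> arbitrary: g) (auto simp: act_edge_def edge_ends_def er_def es_def split: prod.splits)

lemma act_base_irrelevant: "act A B (i, k) \<mu> = act A B (j, k) \<mu>"
  by (induction \<mu> arbitrary: i j k) (auto simp: act_edge_def restr_edge_def split: prod.splits)

lemma act_in_edges: "set \<mu> \<subseteq> edges N A \<Longrightarrow> set (act A B g \<mu>) \<subseteq> edges N A"
proof (induction \<mu> arbitrary: g)
  case (Cons e \<mu>)
  obtain a b m where e: "e = (a, b, m)" by (cases e)
  with Cons.prems have "m < A a b" "a < N" "b < N" by (auto simp: edges_def)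
  then have "nat ((snd g * B a b + int m) mod int (A a b)) < A a b"
    by (simp add: nat_less_iff)
  with Cons e \<open>a < N\<close> \<open>b < N\<close> show ?case by (auto simp: act_edge_def edges_def)
qed simp

lemma act_append: "act A B g (\<mu> @ \<nu>) = act A B g \<mu> @ act A B (restr A B g \<mu>) \<nu>"
  by (induction \<mu> arbitrary: g) auto

lemma act_zero: "set \<mu> \<subseteq> edges N A \<Longrightarrow> act A B (i, 0) \<mu> = \<mu>"
proof (induction \<mu> arbitrary: i)
  case (Cons e \<mu>)
  obtain a b m where e: "e = (a, b, m)" by (cases e)
  with Cons.prems have "m < A a b" by (auto simp: edges_def)
  with Cons e show ?case by (auto simp: act_edge_def restr_edge_def)
qed simp

lemma act_B_zero_head:
  assumes "set (e # \<mu>) \<subseteq> edges N A" and "B (er e) (es e) = 0"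
  shows "act A B g (e # \<mu>) = e # \<mu>"
proof -
  obtain a b m where e: "e = (a, b, m)" by (cases e)
  with assms(1) have "m < A a b" by (auto simp: edges_def)
  with assms(2) e have "act_edge A B g e = e" "restr_edge A B g e = (b, 0)"
    by (auto simp: act_edge_def restr_edge_def er_def es_def)
  with act_zero[of \<mu> N A B b] assms(1) show ?thesis by simp
qed

lemma act_act:
  "set \<mu> \<subseteq> edges N A \<Longrightarrow> act A B (j, k') (act A B (i, k) \<mu>) = act A B (i, k + k') \<mu>"
proof (induction \<mu> arbitrary: i j k k')
  case (Cons e \<mu>)
  obtain a b m where e: "e = (a, b, m)" by (cases e)
  with Cons.prems have "m < A a b" by (auto simp: edges_def)
  define q where "q = int (A a b)"
  define x where "x = k * B a b + int m"
  have q: "q > 0" using \<open>m < A a b\<close> by (simp add: q_def)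
  have mod_eq: "(k' * B a b + x mod q) mod q = ((k + k') * B a b + int m) mod q"
    by (simp add: x_def mod_add_right_eq algebra_simps)
  have split: "(k + k') * B a b + int m = (k' * B a b + x mod q) + (x div q) * q"
    using mod_div_mult_eq[of x q] by (simp add: x_def algebra_simps)
  have div_eq: "((k + k') * B a b + int m) div q = x div q + (k' * B a b + x mod q) div q"
    unfolding split using q by (subst div_mult_self1) auto
  have "act A B (b, (k' * B a b + x mod q) div q) (act A B (b, x div q) \<mu>)
        = act A B (b, x div q + (k' * B a b + x mod q) div q) \<mu>"
    using Cons by simp
  with Cons.prems e q show ?case
    by (simp add: act_edge_def restr_edge_def mod_eq div_eq x_def[symmetric] q_def[symmetric]
        act_base_irrelevant[of A B _ _ \<mu>])
qed simp

lemma path_value_append: "path_value A (\<mu> @ \<nu>) = path_value A \<mu> + int (path_weight A \<mu>) * path_value A \<nu>"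
  by (induction \<mu>) (auto simp: algebra_simps)

lemma path_weight_append: "path_weight A (\<mu> @ \<nu>) = path_weight A \<mu> * path_weight A \<nu>"
  by (induction \<mu>) auto

lemma path_weight_pos: "set \<mu> \<subseteq> edges N A \<Longrightarrow> 0 < path_weight A \<mu>"
  by (induction \<mu>) (auto dest: edge_weight_pos)

lemma path_value_bounds:
  "set \<mu> \<subseteq> edges N A \<Longrightarrow> 0 \<le> path_value A \<mu> \<and> path_value A \<mu> < int (path_weight A \<mu>)"
proof (induction \<mu>)
  case (Cons e \<mu>)
  obtain a b m where e: "e = (a, b, m)" by (cases e)
  with Cons.prems have "m < A a b" by (auto simp: edges_def)
  have IH: "0 \<le> path_value A \<mu>" "path_value A \<mu> \<le> int (path_weight A \<mu>) - 1" using Cons by auto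
  then have "int (A a b) * path_value A \<mu> \<le> int (A a b) * (int (path_weight A \<mu>) - 1)"
    by (simp add: mult_left_mono)
  with IH \<open>m < A a b\<close> e show ?case
    by (auto simp: edge_digit_def er_def es_def algebra_simps)
qed simp

lemma path_value_inj:
  assumes "set \<mu> \<subseteq> edges N A" "set \<nu> \<subseteq> edges N A" "map edge_ends \<mu> = map edge_ends \<nu>"
    and "path_value A \<mu> = path_value A \<nu>"
  shows "\<mu> = \<nu>"
  using assms
proof (induction \<mu> arbitrary: \<nu>)
  case (Cons e \<mu>)
  then obtain e' \<nu>' where \<nu>: "\<nu> = e' # \<nu>'" by (cases \<nu>) auto
  obtain a b m where e: "e = (a, b, m)" by (cases e)
  obtain a' b' m' where e': "e' = (a', b', m')" by (cases e')
  have same: "a' = a" "b' = b" using Cons.prems \<nu> e e' by (auto simp: edge_ends_def er_def es_def)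
  have m: "m < A a b" "m' < A a b" using Cons.prems e e' \<nu> same by (auto simp: edges_def)
  have eq: "int m + int (A a b) * path_value A \<mu> = int m' + int (A a b) * path_value A \<nu>'"
    using Cons.prems \<nu> e e' same by (auto simp: edge_digit_def er_def es_def)
  have "m = m'"
    using arg_cong[OF eq, of "\<lambda>t. t mod int (A a b)"] m by simp
  with eq m have "path_value A \<mu> = path_value A \<nu>'" by simp
  with Cons \<nu> have "\<mu> = \<nu>'" by auto
  with \<nu> e e' same \<open>m = m'\<close> show ?case by simp
qed simp

lemma path_value_act:
  assumes "set \<mu> \<subseteq> edges N A" and "\<forall>e\<in>set \<mu>. B (er e) (es e) = 1"
  shows "path_value A (act A B (i, k) \<mu>) = (k + path_value A \<mu>) mod int (path_weight A \<mu>)"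
  using assms
proof (induction \<mu> arbitrary: i k)
  case (Cons e \<mu>)
  obtain a b m where e: "e = (a, b, m)" by (cases e)
  with Cons.prems have "m < A a b" "B a b = 1" by (auto simp: edges_def er_def es_def)
  define q where "q = int (A a b)"
  define P where "P = int (path_weight A \<mu>)"
  define x where "x = k + int m + q * path_value A \<mu>"
  have q: "q > 0" using \<open>m < A a b\<close> by (simp add: q_def)
  have "x div q = (k + int m) div q + path_value A \<mu>" "x mod q = (k + int m) mod q"
    using q by (simp_all add: x_def)
  with mod_mult2_eq'[of x "nat q" "nat P"] q
  have key: "(k + int m + q * path_value A \<mu>) mod (q * P)
      = (k + int m) mod q + q * (((k + int m) div q + path_value A \<mu>) mod P)"
    by (simp add: x_def P_def add.commute)
  have "path_value A (act A B (b, (k + int m) div q) \<mu>) = ((k + int m) div q + path_value A \<mu>) mod P"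
    using Cons P_def by auto
  with key e \<open>B a b = 1\<close> q show ?case
    by (simp add: act_edge_def restr_edge_def edge_digit_def er_def es_def q_def[symmetric]
        P_def[symmetric] algebra_simps)
qed simp

section \<open>Left-infinite paths and the asymptotic equivalence\<close>

lemma finpref_0 [simp]: "finpref x 0 = [x 0]"
  by (simp add: finpref_def)

lemma finpref_Suc: "finpref x (Suc n) = x (Suc n) # finpref x n"
  by (simp add: finpref_def)

lemma length_finpref [simp]: "length (finpref x n) = Suc n"
  by (simp add: finpref_def)

lemma set_finpref: "set (finpref x n) = x ` {..n}"
  by (auto simp: finpref_def image_iff less_Suc_eq_le simp del: upt_Suc)

lemma finpref_eq_Cons: "finpref x n = x n # rev (map x [0..<n])"
  by (simp add: finpref_def)

lemma finpref_add: "finpref x (n + K) = finpref (\<lambda>j. x (j + K)) n @ rev (map x [0..<K])"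
  by (induction n) (simp_all add: finpref_def finpref_Suc)

lemma finpref_eq_iff: "finpref x n = finpref y n \<longleftrightarrow> (\<forall>j\<le>n. x j = y j)"
  by (auto simp: finpref_def map_eq_conv less_Suc_eq_le simp del: upt_Suc)

lemma funpow_shift: "(shift ^^ K) x = (\<lambda>j. x (j + K))"
  by (induction K arbitrary: x) (auto simp: shift_def)

lemma EAinf_in_edges: "x \<in> EAinf N A \<Longrightarrow> x n \<in> edges N A"
  by (simp add: EAinf_def)

lemma set_finpref_EAinf: "x \<in> EAinf N A \<Longrightarrow> set (finpref x n) \<subseteq> edges N A"
  by (auto simp: set_finpref EAinf_def)

lemma funpow_shift_EAinf: "x \<in> EAinf N A \<Longrightarrow> (shift ^^ K) x \<in> EAinf N A"
  by (simp add: EAinf_def funpow_shift)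

text \<open>Only the exponent of a group element affects its action, so a finite set of group elements
  amounts to a bound on the exponents.\<close>

lemma ae_rel_iff_bounded:
  "ae_rel N A B x y \<longleftrightarrow> x \<in> EAinf N A \<and> y \<in> EAinf N A \<and>
     (\<exists>M ks. \<forall>n. \<bar>ks n\<bar> \<le> M \<and> act A B (0, ks n) (finpref x n) = finpref y n)"
proof
  assume "ae_rel N A B x y"
  then obtain F gs where x: "x \<in> EAinf N A" and y: "y \<in> EAinf N A" and F: "finite F"
    and gs: "\<And>n. gs n \<in> F \<and> act A B (gs n) (finpref x n) = finpref y n"
    unfolding ae_rel_def by blast
  define M where "M = Max ((\<lambda>g. \<bar>snd g\<bar>) ` F)"
  have "\<bar>snd (gs n)\<bar> \<le> M" for n
    unfolding M_def using F gs[of n] by (intro Max_ge) auto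
  moreover have "act A B (0, snd (gs n)) (finpref x n) = finpref y n" for n
    using gs[of n] act_base_irrelevant[of A B "fst (gs n)" "snd (gs n)" _ 0] by simp
  ultimately show "x \<in> EAinf N A \<and> y \<in> EAinf N A \<and>
     (\<exists>M ks. \<forall>n. \<bar>ks n\<bar> \<le> M \<and> act A B (0, ks n) (finpref x n) = finpref y n)"
    using x y by (intro conjI exI[of _ M] exI[of _ "\<lambda>n. snd (gs n)"]) auto
next
  assume "x \<in> EAinf N A \<and> y \<in> EAinf N A \<and>
     (\<exists>M ks. \<forall>n. \<bar>ks n\<bar> \<le> M \<and> act A B (0, ks n) (finpref x n) = finpref y n)"
  then obtain M ks where x: "x \<in> EAinf N A" and y: "y \<in> EAinf N A"
    and ks: "\<And>n. \<bar>ks n\<bar> \<le> M \<and> act A B (0, ks n) (finpref x n) = finpref y n" by blast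
  have "(er (x n), ks n) \<in> {..<N} \<times> {-M..M} \<and>
      act A B (er (x n), ks n) (finpref x n) = finpref y n" for n
    using ks[of n] EAinf_in_edges[OF x, of n] act_base_irrelevant[of A B 0 "ks n" _ "er (x n)"]
    by (cases "x n") (auto simp: edges_def er_def)
  then show "ae_rel N A B x y" unfolding ae_rel_def using x y
    by (intro conjI exI[of _ "{..<N} \<times> {-M..M}"] exI[of _ "\<lambda>n. (er (x n), ks n)"]) auto
qed

lemma ae_rel_EAinf: "ae_rel N A B x y \<Longrightarrow> x \<in> EAinf N A \<and> y \<in> EAinf N A"
  by (simp add: ae_rel_def)

lemma ae_rel_refl: "x \<in> EAinf N A \<Longrightarrow> ae_rel N A B x x"
  unfolding ae_rel_iff_bounded
  by (auto intro!: exI[of _ 0] exI[of _ "\<lambda>_. 0"] simp: act_zero[OF set_finpref_EAinf])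

lemma ae_rel_sym: "ae_rel N A B x y \<Longrightarrow> ae_rel N A B y x"
proof -
  assume "ae_rel N A B x y"
  then obtain M ks where x: "x \<in> EAinf N A" and y: "y \<in> EAinf N A"
    and ks: "\<And>n. \<bar>ks n\<bar> \<le> M \<and> act A B (0, ks n) (finpref x n) = finpref y n"
    unfolding ae_rel_iff_bounded by blast
  have "act A B (0, - ks n) (finpref y n) = finpref x n" for n
  proof -
    have "act A B (0, - ks n) (finpref y n) = act A B (0, - ks n) (act A B (0, ks n) (finpref x n))"
      using ks by simp
    also have "\<dots> = finpref x n"
      using act_act[OF set_finpref_EAinf[OF x]] act_zero[OF set_finpref_EAinf[OF x]] by simp
    finally show ?thesis .
  qed
  with x y ks show ?thesis
    unfolding ae_rel_iff_bounded by (intro conjI exI[of _ M] exI[of _ "\<lambda>n. - ks n"]) auto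
qed

lemma ae_rel_trans: "ae_rel N A B x y \<Longrightarrow> ae_rel N A B y z \<Longrightarrow> ae_rel N A B x z"
proof -
  assume "ae_rel N A B x y" "ae_rel N A B y z"
  then obtain M ks M' ks' where x: "x \<in> EAinf N A" and z: "z \<in> EAinf N A"
    and ks: "\<And>n. \<bar>ks n\<bar> \<le> M \<and> act A B (0, ks n) (finpref x n) = finpref y n"
    and ks': "\<And>n. \<bar>ks' n\<bar> \<le> M' \<and> act A B (0, ks' n) (finpref y n) = finpref z n"
    unfolding ae_rel_iff_bounded by blast
  have "act A B (0, ks n + ks' n) (finpref x n) = finpref z n" for n
    using ks[of n] ks'[of n] act_act[OF set_finpref_EAinf[OF x]] by metis
  moreover have "\<bar>ks n + ks' n\<bar> \<le> M + M'" for n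
    using ks[of n] ks'[of n] by linarith
  ultimately show ?thesis
    unfolding ae_rel_iff_bounded using x z
    by (intro conjI exI[of _ "M + M'"] exI[of _ "\<lambda>n. ks n + ks' n"]) blast+
qed

lemma ae_rel_piE: "ae_rel N A B x y \<Longrightarrow> piE x = piE y"
proof -
  assume "ae_rel N A B x y"
  then obtain ks where ks: "\<And>n. act A B (0, ks n) (finpref x n) = finpref y n"
    unfolding ae_rel_iff_bounded by blast
  have "edge_ends (x n) = edge_ends (y n)" for n
    using map_edge_ends_act[of A B "(0, ks n)" "finpref x n"] ks[of n]
    by (cases n) (auto simp: finpref_Suc)
  then show ?thesis by (auto simp: piE_def edge_ends_def)
qed

lemma ae_rel_funpow_shift: "ae_rel N A B x y \<Longrightarrow> ae_rel N A B ((shift ^^ K) x) ((shift ^^ K) y)"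
proof -
  assume "ae_rel N A B x y"
  then obtain M ks where x: "x \<in> EAinf N A" and y: "y \<in> EAinf N A"
    and ks: "\<And>n. \<bar>ks n\<bar> \<le> M \<and> act A B (0, ks n) (finpref x n) = finpref y n"
    unfolding ae_rel_iff_bounded by blast
  have "act A B (0, ks (n + K)) (finpref ((shift ^^ K) x) n) = finpref ((shift ^^ K) y) n" for n
    using ks[of "n + K"] by (simp add: finpref_add act_append funpow_shift)
  with x y ks show ?thesis
    unfolding ae_rel_iff_bounded
    by (intro conjI funpow_shift_EAinf exI[of _ M] exI[of _ "\<lambda>n. ks (n + K)"]) auto
qed

lemma ae_rel_B_zero_prefix:
  assumes "ae_rel N A B x y" and "B (er (x k)) (es (x k)) = 0"
  shows "\<forall>j\<le>k. x j = y j"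
proof -
  obtain ks where x: "x \<in> EAinf N A" and ks: "\<And>n. act A B (0, ks n) (finpref x n) = finpref y n"
    using assms(1) unfolding ae_rel_iff_bounded by blast
  have "act A B (0, ks k) (finpref x k) = finpref x k"
    using act_B_zero_head[of "x k" _ N A B] set_finpref_EAinf[OF x, of k] assms(2)
    by (metis finpref_eq_Cons)
  with ks[of k] show ?thesis by (simp add: finpref_eq_iff)
qed

lemma ae_rel_B_zero_extend:
  assumes x: "x \<in> EAinf N A" and y: "y \<in> EAinf N A"
    and b: "B (er (x K)) (es (x K)) = 0" and eq: "\<forall>j\<le>K. x j = y j"
    and ae: "ae_rel N A B ((shift ^^ Suc K) x) ((shift ^^ Suc K) y)"
  shows "ae_rel N A B x y"
proof -
  obtain M ks where ks: "\<And>n. \<bar>ks n\<bar> \<le> M \<and>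
      act A B (0, ks n) (finpref ((shift ^^ Suc K) x) n) = finpref ((shift ^^ Suc K) y) n"
    using ae unfolding ae_rel_iff_bounded by blast
  define ks' where "ks' n = (if n \<le> K then 0 else ks (n - Suc K))" for n
  have tail: "rev (map x [0..<Suc K]) = finpref x K" "rev (map y [0..<Suc K]) = finpref x K"
    using eq by (simp_all add: finpref_def map_eq_conv del: upt_Suc)
  have fixed: "act A B g (finpref x K) = finpref x K" for g
    using act_B_zero_head[of "x K" _ N A B g] set_finpref_EAinf[OF x, of K] b
    by (metis finpref_eq_Cons)
  have "\<bar>ks' n\<bar> \<le> max M 0 \<and> act A B (0, ks' n) (finpref x n) = finpref y n" for n
  proof (cases "n \<le> K")
    case True
    with eq act_zero[OF set_finpref_EAinf[OF x, of n]] show ?thesis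
      by (simp add: ks'_def finpref_eq_iff)
  next
    case False
    then obtain n' where n: "n = n' + Suc K" by (metis add.commute le_Suc_ex not_less_eq_eq)
    have "act A B (0, ks n') (finpref (\<lambda>j. x (j + Suc K)) n') = finpref (\<lambda>j. y (j + Suc K)) n'"
      using ks[of n'] by (simp only: funpow_shift)
    then have "act A B (0, ks n') (finpref x n) = finpref y n"
      unfolding n finpref_add tail act_append fixed by simp
    with ks[of n'] show ?thesis by (simp add: ks'_def n le_max_iff_disj)
  qed
  with x y show ?thesis
    unfolding ae_rel_iff_bounded by (intro conjI exI[of _ "max M 0"] exI[of _ ks']) auto
qed

definition class_rep :: "'a set \<Rightarrow> 'a" where
  "class_rep c = (SOME x. x \<in> c)"

lemma aeclass_eq_iff:
  assumes "x \<in> EAinf N A"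
  shows "aeclass N A B x = aeclass N A B y \<longleftrightarrow> ae_rel N A B x y"
proof
  assume "aeclass N A B x = aeclass N A B y"
  moreover have "x \<in> aeclass N A B x" using ae_rel_refl[OF assms] by (simp add: aeclass_def)
  ultimately have "ae_rel N A B y x" by (simp add: aeclass_def)
  then show "ae_rel N A B x y" by (rule ae_rel_sym)
next
  assume "ae_rel N A B x y"
  then have "ae_rel N A B x z \<longleftrightarrow> ae_rel N A B y z" for z
    using ae_rel_sym ae_rel_trans by metis
  then show "aeclass N A B x = aeclass N A B y" by (simp add: aeclass_def)
qed

lemma class_rep_aeclass:
  assumes "x \<in> EAinf N A"
  shows "ae_rel N A B x (class_rep (aeclass N A B x))"
proof -
  have "class_rep (aeclass N A B x) \<in> aeclass N A B x"
    unfolding class_rep_def by (rule someI[of _ x]) (simp add: aeclass_def ae_rel_refl[OF assms])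
  then show ?thesis by (simp add: aeclass_def)
qed

lemma piJ_aeclass: "x \<in> EAinf N A \<Longrightarrow> piJ (aeclass N A B x) = piE x"
  using ae_rel_piE[OF class_rep_aeclass] by (simp add: piJ_def class_rep_def)

lemma sigJ_eq: "sigJ N A B c = aeclass N A B (shift (class_rep c))"
  by (simp add: sigJ_def class_rep_def)

section \<open>The real number coded by a left-infinite path\<close>

definition expansion :: "(nat \<Rightarrow> nat \<Rightarrow> nat) \<Rightarrow> (nat \<Rightarrow> edge) \<Rightarrow> real" where
  "expansion A x = (\<Sum>j. edge_digit (x j) / path_weight A (finpref x j))"

abbreviation partial_expansion :: "(nat \<Rightarrow> nat \<Rightarrow> nat) \<Rightarrow> (nat \<Rightarrow> edge) \<Rightarrow> nat \<Rightarrow> real" where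
  "partial_expansion A x n \<equiv> path_value A (finpref x n) / path_weight A (finpref x n)"

lemma path_weight_finpref: "path_weight A (finpref x n) = (\<Prod>i<Suc n. A (er (x i)) (es (x i)))"
  by (induction n) (auto simp: finpref_Suc)

lemma path_weight_finpref_pos: "x \<in> EAinf N A \<Longrightarrow> 0 < path_weight A (finpref x n)"
  using path_weight_pos[OF set_finpref_EAinf] by blast

lemma sum_expansion_terms:
  assumes x: "x \<in> EAinf N A"
  shows "(\<Sum>j\<le>n. edge_digit (x j) / path_weight A (finpref x j)) = partial_expansion A x n"
proof (induction n)
  case (Suc n)
  have "0 < A (er (x (Suc n))) (es (x (Suc n)))" "0 < path_weight A (finpref x n)"
    using edge_weight_pos[OF EAinf_in_edges[OF x]] path_weight_finpref_pos[OF x] by auto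
  with Suc show ?case by (simp add: finpref_Suc field_simps)
qed simp

lemma partial_expansion_bounds:
  assumes "x \<in> EAinf N A"
  shows "0 \<le> partial_expansion A x n" "partial_expansion A x n < 1"
  using path_value_bounds[OF set_finpref_EAinf[OF assms, of n]] path_weight_finpref_pos[OF assms, of n]
  by (auto simp: divide_less_eq)

lemma summable_expansion_terms:
  assumes x: "x \<in> EAinf N A"
  shows "summable (\<lambda>j. edge_digit (x j) / path_weight A (finpref x j))"
proof (rule bounded_imp_summable)
  show "0 \<le> edge_digit (x j) / path_weight A (finpref x j)" for j
    by (simp add: edge_digit_def)
  show "(\<Sum>j\<le>n. edge_digit (x j) / path_weight A (finpref x j)) \<le> 1" for n
    using sum_expansion_terms[OF x, of n] partial_expansion_bounds[OF x, of n] by simp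
qed

lemma partial_expansion_LIMSEQ:
  assumes x: "x \<in> EAinf N A"
  shows "partial_expansion A x \<longlonglongrightarrow> expansion A x"
  using LIMSEQ_Suc[OF summable_LIMSEQ[OF summable_expansion_terms[OF x]]]
  by (simp add: expansion_def sum_expansion_terms[OF x] lessThan_Suc_atMost)

lemma partial_expansion_mono:
  assumes x: "x \<in> EAinf N A" and "n < m"
  shows "partial_expansion A x n \<le> partial_expansion A x m \<and>
    partial_expansion A x m \<le> partial_expansion A x n + 1 / path_weight A (finpref x n)"
proof -
  obtain k where m: "m = k + Suc n" using less_imp_Suc_add[OF \<open>n < m\<close>] by auto
  define \<mu> where "\<mu> = finpref (\<lambda>j. x (j + Suc n)) k"
  have split: "finpref x m = \<mu> @ finpref x n"
    unfolding m \<mu>_def finpref_add by (simp add: finpref_def del: upt_Suc)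
  have \<mu>: "set \<mu> \<subseteq> edges N A"
    unfolding \<mu>_def set_finpref using EAinf_in_edges[OF x] by auto
  define L where "L = real (path_weight A \<mu>)"
  define W where "W = real_of_int (path_value A \<mu>)"
  define P where "P = real (path_weight A (finpref x n))"
  define V where "V = real_of_int (path_value A (finpref x n))"
  have "L > 0" "0 \<le> W" "W < L"
    using path_weight_pos[OF \<mu>] path_value_bounds[OF \<mu>] by (auto simp: L_def W_def)
  moreover have "P > 0" using path_weight_finpref_pos[OF x] by (simp add: P_def)
  ultimately have "partial_expansion A x m = W / (L * P) + V / P" "W / (L * P) < 1 / P" "0 \<le> W / (L * P)"
    by (simp_all add: split path_value_append path_weight_append L_def P_def W_def V_def field_simps)
  then show ?thesis by (simp add: V_def P_def)
qed

lemma expansion_bounds: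
  assumes x: "x \<in> EAinf N A"
  shows "partial_expansion A x n \<le> expansion A x"
    "expansion A x \<le> partial_expansion A x n + 1 / path_weight A (finpref x n)"
proof -
  have "partial_expansion A x n \<le> partial_expansion A x m \<and>
      partial_expansion A x m \<le> partial_expansion A x n + 1 / path_weight A (finpref x n)" if "n \<le> m" for m
    using partial_expansion_mono[OF x, of n m] that path_weight_finpref_pos[OF x, of n]
    by (cases "n = m") auto
  then show "partial_expansion A x n \<le> expansion A x"
    "expansion A x \<le> partial_expansion A x n + 1 / path_weight A (finpref x n)"
    by (blast intro: LIMSEQ_le_const[OF partial_expansion_LIMSEQ[OF x]]
        LIMSEQ_le_const2[OF partial_expansion_LIMSEQ[OF x]])+
qed

lemma expansion_shift:
  assumes x: "x \<in> EAinf N A"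
  shows "expansion A (shift x) = A (er (x 0)) (es (x 0)) * expansion A x - edge_digit (x 0)"
proof -
  define g where "g = (\<lambda>j. edge_digit (x j) / path_weight A (finpref x j))"
  define a where "a = A (er (x 0)) (es (x 0))"
  have a: "0 < a" using edge_weight_pos[OF EAinf_in_edges[OF x]] by (simp add: a_def)
  have g: "summable g" unfolding g_def by (rule summable_expansion_terms[OF x])
  have "path_weight A (finpref x (Suc j)) = a * path_weight A (finpref (shift x) j)" for j
    unfolding path_weight_finpref a_def shift_def by (simp only: prod.lessThan_Suc_shift)
  then have "expansion A (shift x) = (\<Sum>j. a * g (Suc j))"
    using a by (simp add: expansion_def g_def shift_def)
  also have "\<dots> = a * (\<Sum>j. g (Suc j))"
    by (rule suminf_mult) (simp add: summable_Suc_iff g)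
  also have "(\<Sum>j. g (Suc j)) = expansion A x - g 0"
    using suminf_split_head[OF g] by (simp add: expansion_def g_def)
  also have "g 0 = edge_digit (x 0) / a" by (simp add: g_def a_def)
  finally show ?thesis using a by (simp add: a_def right_diff_distrib)
qed

lemma unbounded_imp_inverse_small:
  fixes P :: "nat \<Rightarrow> nat" and C \<epsilon> :: real
  assumes "\<forall>M. \<exists>n. M < P n" and "0 < \<epsilon>"
  shows "\<exists>n. 0 < P n \<and> C / P n < \<epsilon>"
proof -
  obtain n where n: "nat \<lceil>\<bar>C\<bar> / \<epsilon>\<rceil> < P n" using assms(1) by blast
  then have "\<bar>C\<bar> / \<epsilon> < P n" by linarith
  then have "\<bar>C\<bar> < \<epsilon> * P n" using assms(2) by (simp add: pos_divide_less_eq mult.commute)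
  with n have "0 < P n" "C / P n < \<epsilon>" by (auto simp: divide_less_eq)
  then show ?thesis by blast
qed

lemma eq_0_if_le_inverse_unbounded:
  fixes P :: "nat \<Rightarrow> nat" and C D :: real
  assumes "\<forall>M. \<exists>n. M < P n" and "\<forall>n. \<bar>D\<bar> \<le> C / P n"
  shows "D = 0"
proof (rule ccontr)
  assume "D \<noteq> 0"
  then obtain n where "C / P n < \<bar>D\<bar>"
    using unbounded_imp_inverse_small[OF assms(1), of "\<bar>D\<bar>" C] by auto
  with assms(2) show False by (meson not_le)
qed

lemma Ints_if_approx_unbounded:
  fixes P :: "nat \<Rightarrow> nat" and z :: "nat \<Rightarrow> int" and C D :: real
  assumes "\<forall>M. \<exists>n. M < P n" and "\<forall>n. \<bar>D - z n\<bar> \<le> C / P n"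
  shows "D \<in> \<int>"
proof -
  have "\<exists>y\<in>\<int>. dist y D < \<epsilon>" if \<epsilon>: "0 < \<epsilon>" for \<epsilon>
  proof -
    obtain n where "C / P n < \<epsilon>" using unbounded_imp_inverse_small[OF assms(1) \<epsilon>] by blast
    with assms(2) have "\<bar>D - z n\<bar> < \<epsilon>" using le_less_trans by blast
    then have "dist (real_of_int (z n)) D < \<epsilon>" by (simp add: dist_real_def abs_minus_commute)
    then show ?thesis using Ints_of_int by blast
  qed
  then show ?thesis using closed_approachable[OF closed_Ints] by blast
qed

section \<open>Fibres over the connectivity graph\<close>

definition path_fibre :: "nat \<Rightarrow> (nat \<Rightarrow> nat \<Rightarrow> nat) \<Rightarrow> (nat \<Rightarrow> nat \<times> nat) \<Rightarrow> (nat \<Rightarrow> edge) set" where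
  "path_fibre N A v = {x \<in> EAinf N A. piE x = v}"

abbreviation B_zero_at :: "(nat \<Rightarrow> nat \<Rightarrow> int) \<Rightarrow> (nat \<Rightarrow> nat \<times> nat) \<Rightarrow> nat \<Rightarrow> bool" where
  "B_zero_at B v n \<equiv> B (fst (v n)) (snd (v n)) = 0"

definition fibre_weight :: "(nat \<Rightarrow> nat \<Rightarrow> nat) \<Rightarrow> (nat \<Rightarrow> nat \<times> nat) \<Rightarrow> nat \<Rightarrow> nat" where
  "fibre_weight A v n = (\<Prod>i<Suc n. A (fst (v i)) (snd (v i)))"

lemma Kv_eq_0_iff: "Kv B v = 0 \<longleftrightarrow> (\<forall>n. \<not> B_zero_at B v n)"
  by (auto simp: Kv_def Let_def zero_enat_def)

lemma Kv_eq_infinity_iff: "Kv B v = \<infinity> \<longleftrightarrow> infinite {n. B_zero_at B v n}"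
  by (auto simp: Kv_def Let_def zero_enat_def)

lemma Kv_eq_Suc_iff: "Kv B v = enat (Suc k) \<longleftrightarrow> B_zero_at B v k \<and> (\<forall>n>k. \<not> B_zero_at B v n)"
proof
  assume K: "Kv B v = enat (Suc k)"
  let ?Z = "{n. B_zero_at B v n}"
  have Z: "finite ?Z" "?Z \<noteq> {}" "Max ?Z = k"
    using K by (auto simp: Kv_def Let_def zero_enat_def split: if_splits)
  have "k \<in> ?Z" using Max_in[OF Z(1,2)] Z(3) by simp
  moreover have "\<not> B_zero_at B v n" if "n > k" for n
    using Max_ge[OF Z(1), of n] Z(3) that by auto
  ultimately show "B_zero_at B v k \<and> (\<forall>n>k. \<not> B_zero_at B v n)" by simp
next
  assume Z: "B_zero_at B v k \<and> (\<forall>n>k. \<not> B_zero_at B v n)"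
  let ?Z = "{n. B_zero_at B v n}"
  have "?Z \<subseteq> {..k}" using Z by (auto simp: not_less[symmetric])
  then have "finite ?Z" using finite_subset by blast
  moreover have "Max ?Z = k" using Z \<open>?Z \<subseteq> {..k}\<close> \<open>finite ?Z\<close> by (intro Max_eqI) auto
  ultimately show "Kv B v = enat (Suc k)" using Z by (auto simp: Kv_def Let_def)
qed

lemma Kv_cases: "Kv B v = 0 \<or> Kv B v = \<infinity> \<or> (\<exists>k. Kv B v = enat (Suc k))"
  by (auto simp: Kv_def Let_def zero_enat_def)

lemma Kv_shift_infinity: "Kv B v = \<infinity> \<Longrightarrow> Kv B (shift v) = \<infinity>"
proof -
  assume "Kv B v = \<infinity>"
  moreover have "n \<in> insert 0 (Suc ` {n. B_zero_at B (shift v) n})" if "B_zero_at B v n" for n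
    using that by (cases n) (auto simp: shift_def)
  then have "{n. B_zero_at B v n} \<subseteq> insert 0 (Suc ` {n. B_zero_at B (shift v) n})"
    by blast
  ultimately show ?thesis
    using finite_subset[of "{n. B_zero_at B v n}"] by (auto simp: Kv_eq_infinity_iff)
qed

lemma Kv_shift_Suc: "Kv B v = enat (Suc (Suc k)) \<Longrightarrow> Kv B (shift v) = enat (Suc k)"
  by (simp add: Kv_eq_Suc_iff shift_def)

lemma Kv_funpow_shift: "Kv B v = enat K \<Longrightarrow> Kv B ((shift ^^ K) v) = 0"
proof (cases K)
  case (Suc k)
  assume "Kv B v = enat K"
  then have "\<forall>n>k. \<not> B_zero_at B v n" using Suc Kv_eq_Suc_iff by blast
  then show ?thesis unfolding Kv_eq_0_iff funpow_shift using Suc by simp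
qed (simp add: zero_enat_def)

lemma fibre_weight_le_supA: "enat (fibre_weight A v n) \<le> supA A v"
  unfolding supA_def fibre_weight_def by (rule SUP_upper) simp

lemma supA_eq_infinity_iff: "supA A v = \<infinity> \<longleftrightarrow> (\<forall>M. \<exists>n. M < fibre_weight A v n)"
proof
  assume "supA A v = \<infinity>"
  show "\<forall>M. \<exists>n. M < fibre_weight A v n"
  proof (rule ccontr)
    assume "\<not> (\<forall>M. \<exists>n. M < fibre_weight A v n)"
    then obtain M where "\<And>n. fibre_weight A v n \<le> M" by (auto simp: not_less)
    then have "supA A v \<le> enat M" unfolding supA_def by (intro SUP_least) (auto simp: fibre_weight_def)
    with \<open>supA A v = \<infinity>\<close> show False by simp
  qed
next
  assume unbounded: "\<forall>M. \<exists>n. M < fibre_weight A v n"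
  show "supA A v = \<infinity>"
  proof (rule ccontr)
    assume "supA A v \<noteq> \<infinity>"
    then obtain M where M: "supA A v = enat M" by auto
    obtain n where "M < fibre_weight A v n" using unbounded by blast
    with fibre_weight_le_supA[of A v n] M show False by simp
  qed
qed

lemma ECinf_funpow_shift: "v \<in> ECinf N A \<Longrightarrow> (shift ^^ K) v \<in> ECinf N A"
  by (simp add: ECinf_def funpow_shift)

lemma ECinf_shift: "v \<in> ECinf N A \<Longrightarrow> shift v \<in> ECinf N A"
  using ECinf_funpow_shift[of v N A 1] by simp

lemma supA_shift:
  assumes v: "v \<in> ECinf N A" and "supA A v = \<infinity>"
  shows "supA A (shift v) = \<infinity>"
proof -
  define a where "a = A (fst (v 0)) (snd (v 0))"
  have a: "0 < a" using v by (simp add: ECinf_def a_def)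
  have "\<exists>n. M < fibre_weight A (shift v) n" for M
  proof -
    obtain n where n: "a * M < fibre_weight A v n" using assms(2) supA_eq_infinity_iff by blast
    show ?thesis
    proof (cases n)
      case 0
      with n have "M = 0" by (simp add: a_def fibre_weight_def)
      with ECinf_shift[OF v] show ?thesis by (intro exI[of _ 0]) (simp add: ECinf_def fibre_weight_def)
    next
      case (Suc m)
      have "fibre_weight A v (Suc m) = a * fibre_weight A (shift v) m"
        unfolding fibre_weight_def a_def shift_def by (simp only: prod.lessThan_Suc_shift)
      with n Suc a show ?thesis by auto
    qed
  qed
  then show ?thesis using supA_eq_infinity_iff by blast
qed

lemma piE_funpow_shift: "piE ((shift ^^ K) x) = (shift ^^ K) (piE x)"
  by (simp add: piE_def funpow_shift)

lemma path_fibreD: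
  assumes "x \<in> path_fibre N A v"
  shows "x \<in> EAinf N A" and "er (x n) = fst (v n)" and "es (x n) = snd (v n)"
proof -
  from assms have "x \<in> EAinf N A" "piE x n = v n" by (simp_all add: path_fibre_def)
  then show "x \<in> EAinf N A" "er (x n) = fst (v n)" "es (x n) = snd (v n)"
    by (auto simp: piE_def prod_eq_iff)
qed

lemma funpow_shift_path_fibre: "x \<in> path_fibre N A v \<Longrightarrow> (shift ^^ K) x \<in> path_fibre N A ((shift ^^ K) v)"
  by (auto simp: path_fibre_def funpow_shift_EAinf piE_funpow_shift)

lemma shift_path_fibre: "x \<in> path_fibre N A v \<Longrightarrow> shift x \<in> path_fibre N A (shift v)"
  using funpow_shift_path_fibre[of x N A v 1] by simp

lemma ae_rel_path_fibre: "x \<in> path_fibre N A v \<Longrightarrow> ae_rel N A B x y \<Longrightarrow> y \<in> path_fibre N A v"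
  using ae_rel_piE ae_rel_EAinf by (fastforce simp: path_fibre_def)

lemma path_weight_path_fibre: "x \<in> path_fibre N A v \<Longrightarrow> path_weight A (finpref x n) = fibre_weight A v n"
  by (simp add: path_weight_finpref path_fibreD fibre_weight_def)

lemma fibre_weight_pos: "x \<in> path_fibre N A v \<Longrightarrow> 0 < fibre_weight A v n"
  using path_weight_finpref_pos[OF path_fibreD(1)] path_weight_path_fibre by metis

definition zero_lift :: "(nat \<Rightarrow> nat \<times> nat) \<Rightarrow> nat \<Rightarrow> edge" where
  "zero_lift v n = (fst (v n), snd (v n), 0)"

lemma zero_lift_path_fibre: "v \<in> ECinf N A \<Longrightarrow> zero_lift v \<in> path_fibre N A v"
  by (auto simp: path_fibre_def EAinf_def ECinf_def zero_lift_def edges_def er_def es_def piE_def)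

lemma B_one_path_fibre:
  assumes v: "v \<in> ECinf N A" and B01: "\<forall>i<N. \<forall>j<N. B i j \<in> {0, 1}" and "Kv B v = 0"
    and x: "x \<in> path_fibre N A v"
  shows "\<forall>e\<in>set (finpref x n). B (er e) (es e) = 1"
  using v B01 \<open>Kv B v = 0\<close> path_fibreD[OF x]
  by (auto simp: set_finpref ECinf_def Kv_eq_0_iff)

section \<open>The asymptotic equivalence inside a fibre\<close>

lemma ae_rel_Kv_infinity:
  assumes "Kv B v = \<infinity>" and x: "x \<in> path_fibre N A v" and "ae_rel N A B x y"
  shows "y = x"
proof
  fix m
  have "infinite {n. B_zero_at B v n}" using assms(1) Kv_eq_infinity_iff by blast
  then obtain n where "m \<le> n" "B_zero_at B v n" unfolding infinite_nat_iff_unbounded_le by blast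
  with ae_rel_B_zero_prefix[OF assms(3)] path_fibreD[OF x] show "y m = x m" by simp
qed

lemma ae_rel_Kv_Suc_iff:
  assumes K: "Kv B v = enat (Suc k)" and x: "x \<in> path_fibre N A v" and y: "y \<in> path_fibre N A v"
  shows "ae_rel N A B x y \<longleftrightarrow>
    (\<forall>j\<le>k. x j = y j) \<and> ae_rel N A B ((shift ^^ Suc k) x) ((shift ^^ Suc k) y)"
proof -
  have "B_zero_at B v k" using K Kv_eq_Suc_iff by blast
  then have B0: "B (er (x k)) (es (x k)) = 0" by (simp add: path_fibreD[OF x])
  show ?thesis
  proof
    assume ae: "ae_rel N A B x y"
    show "(\<forall>j\<le>k. x j = y j) \<and> ae_rel N A B ((shift ^^ Suc k) x) ((shift ^^ Suc k) y)"
      using ae_rel_B_zero_prefix[OF ae B0] ae_rel_funpow_shift[OF ae] by blast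
  next
    assume "(\<forall>j\<le>k. x j = y j) \<and> ae_rel N A B ((shift ^^ Suc k) x) ((shift ^^ Suc k) y)"
    with B0 show "ae_rel N A B x y"
      using ae_rel_B_zero_extend[OF path_fibreD(1)[OF x] path_fibreD(1)[OF y]] by blast
  qed
qed

lemma ae_rel_iff_bounded_residues:
  assumes v: "v \<in> ECinf N A" and B01: "\<forall>i<N. \<forall>j<N. B i j \<in> {0, 1}" and K: "Kv B v = 0"
    and x: "x \<in> path_fibre N A v" and y: "y \<in> path_fibre N A v"
  shows "ae_rel N A B x y \<longleftrightarrow> (\<exists>M k. \<forall>n. \<bar>k n\<bar> \<le> M \<and>
    path_value A (finpref y n) = (k n + path_value A (finpref x n)) mod int (fibre_weight A v n))"
proof -
  have xE: "x \<in> EAinf N A" and yE: "y \<in> EAinf N A" using x y path_fibreD by blast+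
  have value_act: "path_value A (act A B (0, k) (finpref x n))
      = (k + path_value A (finpref x n)) mod int (fibre_weight A v n)" for k n
    using path_value_act[OF set_finpref_EAinf[OF xE] B_one_path_fibre[OF v B01 K x]]
      path_weight_path_fibre[OF x] by simp
  have "act A B (0, k) (finpref x n) = finpref y n \<longleftrightarrow>
      path_value A (finpref y n) = (k + path_value A (finpref x n)) mod int (fibre_weight A v n)" for k n
  proof
    assume "path_value A (finpref y n) = (k + path_value A (finpref x n)) mod int (fibre_weight A v n)"
    then have "path_value A (act A B (0, k) (finpref x n)) = path_value A (finpref y n)"
      using value_act by simp
    moreover have "edge_ends \<circ> x = edge_ends \<circ> y"
      using path_fibreD[OF x] path_fibreD[OF y] by (simp add: edge_ends_def fun_eq_iff)
    then have "map edge_ends (act A B (0, k) (finpref x n)) = map edge_ends (finpref y n)"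
      unfolding map_edge_ends_act by (simp add: finpref_def rev_map del: upt_Suc)
    ultimately show "act A B (0, k) (finpref x n) = finpref y n"
      by (intro path_value_inj[OF act_in_edges[OF set_finpref_EAinf[OF xE]] set_finpref_EAinf[OF yE]])
  qed (use value_act[of k n] in simp)
  then show ?thesis using xE yE unfolding ae_rel_iff_bounded by simp
qed

lemma ae_rel_supA_finite:
  assumes v: "v \<in> ECinf N A" and B01: "\<forall>i<N. \<forall>j<N. B i j \<in> {0, 1}" and K: "Kv B v = 0"
    and "supA A v < \<infinity>" and x: "x \<in> path_fibre N A v" and y: "y \<in> path_fibre N A v"
  shows "ae_rel N A B x y"
proof -
  obtain M where "supA A v = enat M" using assms(4) by (cases "supA A v") auto
  then have M: "fibre_weight A v n \<le> M" for n using fibre_weight_le_supA[of A v n] by simp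
  define k where "k n = path_value A (finpref y n) - path_value A (finpref x n)" for n
  have bounds: "0 \<le> path_value A (finpref z n)" "path_value A (finpref z n) < int (fibre_weight A v n)"
    if "z \<in> path_fibre N A v" for z n
    using path_value_bounds[OF set_finpref_EAinf[OF path_fibreD(1)[OF that]]]
      path_weight_path_fibre[OF that] by auto
  have "\<bar>k n\<bar> \<le> int M" for n
    using bounds[OF x, of n] bounds[OF y, of n] M[of n] unfolding k_def by linarith
  moreover have "path_value A (finpref y n) = (k n + path_value A (finpref x n)) mod int (fibre_weight A v n)" for n
    using bounds[OF y, of n] by (simp add: k_def)
  ultimately show ?thesis
    using ae_rel_iff_bounded_residues[OF v B01 K x y] by blast
qed

lemma expansion_diff_approx:
  assumes x: "x \<in> path_fibre N A v" and y: "y \<in> path_fibre N A v"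
  shows "\<bar>expansion A y - expansion A x
      - (path_value A (finpref y n) - path_value A (finpref x n)) / fibre_weight A v n\<bar>
    \<le> 1 / fibre_weight A v n"
proof -
  define W where "W = real (fibre_weight A v n)"
  have "path_value A (finpref z n) / W \<le> expansion A z"
    "expansion A z \<le> path_value A (finpref z n) / W + 1 / W"
    if "z \<in> path_fibre N A v" for z
    using expansion_bounds[OF path_fibreD(1)[OF that], of n]
    unfolding path_weight_path_fibre[OF that] W_def by auto
  from this[OF x] this[OF y] show ?thesis
    unfolding W_def[symmetric] of_int_diff diff_divide_distrib by (simp only: abs_le_iff) linarith
qed

text \<open>In the next two lemmas \<open>t\<close> is approximated by \<open>(b\<^sub>n - a\<^sub>n) / W\<^sub>n\<close> up to \<open>1 / W\<^sub>n\<close>, as is the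
  difference of two expansions; it is an integer exactly when \<open>b\<^sub>n\<close> is a bounded translate of
  \<open>a\<^sub>n\<close> modulo \<open>W\<^sub>n\<close>.\<close>

lemma Ints_if_bounded_residues:
  fixes W :: "nat \<Rightarrow> nat" and a b k :: "nat \<Rightarrow> int" and t :: real
  assumes unbounded: "\<forall>M. \<exists>n. M < W n" and W: "\<And>n. 0 < W n"
    and approx: "\<And>n. \<bar>t - (real_of_int (b n) - a n) / W n\<bar> \<le> 1 / W n"
    and k: "\<And>n. \<bar>k n\<bar> \<le> M" "\<And>n. b n = (k n + a n) mod W n"
  shows "t \<in> \<int>"
proof -
  define d where "d n = (k n + a n) div W n" for n
  have "\<bar>t - (- d n)\<bar> \<le> (M + 1) / W n" for n
  proof -
    have "b n - a n = k n - W n * d n"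
      using k(2)[of n] div_mult_mod_eq[of "k n + a n" "W n"] by (simp add: d_def algebra_simps)
    from arg_cong[OF this, of real_of_int]
    have "real_of_int (b n) - a n = real_of_int (k n) - W n * d n" by simp
    then have "(real_of_int (b n) - a n) / W n = k n / W n - d n"
      using W[of n] by (simp add: diff_divide_distrib)
    moreover have "\<bar>real_of_int (k n)\<bar> \<le> M"
      using k(1)[of n] by (simp only: of_int_abs[symmetric] of_int_le_iff)
    then have "\<bar>k n / W n\<bar> \<le> M / W n"
      unfolding abs_divide abs_of_nat by (rule divide_right_mono) simp
    moreover have "(M + 1) / W n = M / W n + 1 / W n"
      by (simp add: add_divide_distrib)
    ultimately show ?thesis
      using approx[of n] unfolding of_int_minus abs_le_iff by linarith
  qed
  then show ?thesis
    by (intro Ints_if_approx_unbounded[OF unbounded, where z = "\<lambda>n. - d n"]) auto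
qed

lemma bounded_residues_if_Ints:
  fixes W :: "nat \<Rightarrow> nat" and a b :: "nat \<Rightarrow> int" and t :: real
  assumes W: "\<And>n. 0 < W n" and b: "\<And>n. 0 \<le> b n \<and> b n < W n"
    and approx: "\<And>n. \<bar>t - (real_of_int (b n) - a n) / W n\<bar> \<le> 1 / W n"
    and "t \<in> \<int>"
  shows "\<exists>k. \<forall>n. \<bar>k n\<bar> \<le> 1 \<and> b n = (k n + a n) mod W n"
proof -
  obtain z where z: "t = real_of_int z" using \<open>t \<in> \<int>\<close> by (auto elim: Ints_cases)
  define k where "k n = b n - a n - W n * z" for n
  have "\<bar>k n\<bar> \<le> 1" for n
  proof -
    have "real_of_int (k n) / W n = (real_of_int (b n) - a n) / W n - z"
      using W[of n] by (simp add: k_def diff_divide_distrib)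
    then have "\<bar>real_of_int (k n)\<bar> / W n \<le> 1 / W n"
      using approx[of n] by (simp add: abs_divide z abs_minus_commute)
    then have "\<bar>real_of_int (k n)\<bar> \<le> 1"
      using W[of n] by (simp add: divide_le_cancel)
    then show ?thesis by linarith
  qed
  moreover have "b n = (k n + a n) mod W n" for n
  proof -
    have "k n + a n = b n + (- z) * W n" by (simp add: k_def algebra_simps)
    with b[of n] show ?thesis by (simp only: mod_mult_self1 mod_pos_pos_trivial)
  qed
  ultimately show ?thesis by blast
qed

lemma ae_rel_iff_expansion_diff_Ints:
  assumes v: "v \<in> ECinf N A" and B01: "\<forall>i<N. \<forall>j<N. B i j \<in> {0, 1}" and K: "Kv B v = 0"
    and unbounded: "supA A v = \<infinity>" and x: "x \<in> path_fibre N A v" and y: "y \<in> path_fibre N A v"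
  shows "ae_rel N A B x y \<longleftrightarrow> expansion A y - expansion A x \<in> \<int>"
proof -
  define W where "W n = fibre_weight A v n" for n
  define a where "a n = path_value A (finpref x n)" for n
  define b where "b n = path_value A (finpref y n)" for n
  have W: "0 < W n" for n using fibre_weight_pos[OF x] by (simp add: W_def)
  have "\<forall>M. \<exists>n. M < W n" using unbounded supA_eq_infinity_iff by (simp add: W_def)
  moreover have "\<bar>expansion A y - expansion A x - (real_of_int (b n) - a n) / W n\<bar> \<le> 1 / W n" for n
    using expansion_diff_approx[OF x y] by (simp add: W_def a_def b_def)
  moreover have "0 \<le> b n \<and> b n < W n" for n
    using path_value_bounds[OF set_finpref_EAinf[OF path_fibreD(1)[OF y]]]
    unfolding b_def W_def path_weight_path_fibre[OF y] by auto
  moreover have "ae_rel N A B x y \<longleftrightarrow> (\<exists>M k. \<forall>n. \<bar>k n\<bar> \<le> M \<and> b n = (k n + a n) mod W n)"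
    using ae_rel_iff_bounded_residues[OF v B01 K x y] by (simp add: W_def a_def b_def)
  ultimately show ?thesis
    using W Ints_if_bounded_residues[of W] bounded_residues_if_Ints[of W b] by metis
qed

section \<open>Topology of path spaces and of the limit space\<close>

lemma istopology_quotient: "istopology (\<lambda>U. U \<subseteq> f ` topspace X \<and> openin X {x \<in> topspace X. f x \<in> U})"
proof -
  have "S \<inter> T \<subseteq> f ` topspace X \<and> openin X {x \<in> topspace X. f x \<in> S \<inter> T}"
    if "S \<subseteq> f ` topspace X \<and> openin X {x \<in> topspace X. f x \<in> S}"
      "T \<subseteq> f ` topspace X \<and> openin X {x \<in> topspace X. f x \<in> T}" for S T
  proof -
    have "{x \<in> topspace X. f x \<in> S \<inter> T} = {x \<in> topspace X. f x \<in> S} \<inter> {x \<in> topspace X. f x \<in> T}"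
      by auto
    with that show ?thesis by (auto intro: openin_Int)
  qed
  moreover have "\<Union>K \<subseteq> f ` topspace X \<and> openin X {x \<in> topspace X. f x \<in> \<Union>K}"
    if "\<forall>U\<in>K. U \<subseteq> f ` topspace X \<and> openin X {x \<in> topspace X. f x \<in> U}" for K
  proof -
    have "{x \<in> topspace X. f x \<in> \<Union>K} = (\<Union>U\<in>K. {x \<in> topspace X. f x \<in> U})" by auto
    with that show ?thesis by (auto intro: openin_Union)
  qed
  ultimately show ?thesis unfolding istopology_def by blast
qed

lemma openin_quotient_topology:
  "openin (quotient_topology X f) U \<longleftrightarrow> U \<subseteq> f ` topspace X \<and> openin X {x \<in> topspace X. f x \<in> U}"
  unfolding quotient_topology_def topology_inverse'[OF istopology_quotient] ..

lemma topspace_quotient_topology: "topspace (quotient_topology X f) = f ` topspace X"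
proof -
  have "{x \<in> topspace X. f x \<in> f ` topspace X} = topspace X" by auto
  then have "openin (quotient_topology X f) (f ` topspace X)" unfolding openin_quotient_topology by simp
  then show ?thesis
    using openin_subset openin_quotient_topology[of X f "topspace (quotient_topology X f)"] by blast
qed

lemma quotient_map_quotient_topology: "quotient_map X (quotient_topology X f) f"
  unfolding quotient_map_def topspace_quotient_topology openin_quotient_topology by auto

abbreviation discrete_sequences :: "'a set \<Rightarrow> (nat \<Rightarrow> 'a) topology" where
  "discrete_sequences E \<equiv> product_topology (\<lambda>_. discrete_topology E) UNIV"

lemma openin_cylinder:
  assumes "S \<subseteq> topspace (discrete_sequences E)"
  shows "openin (subtopology (discrete_sequences E) S) {y \<in> S. \<forall>j<n. y j = x j}"
proof -
  have cyl: "openin (discrete_sequences E) {y \<in> topspace (discrete_sequences E). \<forall>j<n. y j = x j}"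
  proof (induction n)
    case 0
    show ?case using openin_topspace[of "discrete_sequences E"] by simp
  next
    case (Suc n)
    have "openin (discrete_sequences E) {y \<in> topspace (discrete_sequences E). y n \<in> {x n} \<inter> E}"
      by (rule openin_continuous_map_preimage[OF continuous_map_product_projection]) auto
    moreover have "{y \<in> topspace (discrete_sequences E). \<forall>j<Suc n. y j = x j} =
        {y \<in> topspace (discrete_sequences E). \<forall>j<n. y j = x j}
        \<inter> {y \<in> topspace (discrete_sequences E). y n \<in> {x n} \<inter> E}"
      by (auto simp: less_Suc_eq)
    ultimately show ?case using Suc by (simp add: openin_Int)
  qed
  have "S \<inter> {y \<in> topspace (discrete_sequences E). \<forall>j<n. y j = x j} = {y \<in> S. \<forall>j<n. y j = x j}"
    using assms by blast
  with openin_subtopology_Int2[OF cyl, of S] show ?thesis by simp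
qed

lemma continuous_map_discrete_sequences:
  assumes S: "S \<subseteq> topspace (discrete_sequences E)" and f: "f \<in> S \<rightarrow> topspace Y"
    and local: "\<And>x U. x \<in> S \<Longrightarrow> openin Y U \<Longrightarrow> f x \<in> U \<Longrightarrow>
      \<exists>n. \<forall>y\<in>S. (\<forall>j<n. y j = x j) \<longrightarrow> f y \<in> U"
  shows "continuous_map (subtopology (discrete_sequences E) S) Y f"
  unfolding continuous_map_def
proof (intro conjI allI impI)
  have top: "topspace (subtopology (discrete_sequences E) S) = S"
    using S by (simp only: topspace_subtopology_subset)
  show "f \<in> topspace (subtopology (discrete_sequences E) S) \<rightarrow> topspace Y"
    using f top by simp
  fix U assume U: "openin Y U"
  show "openin (subtopology (discrete_sequences E) S) {x \<in> topspace (subtopology (discrete_sequences E) S). f x \<in> U}"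
  proof (subst openin_subopen, intro ballI)
    fix x assume "x \<in> {x \<in> topspace (subtopology (discrete_sequences E) S). f x \<in> U}"
    then have x: "x \<in> S" "f x \<in> U" using top by auto
    then obtain n where "\<forall>y\<in>S. (\<forall>j<n. y j = x j) \<longrightarrow> f y \<in> U" using local U by blast
    with openin_cylinder[OF S, of n x] x top show "\<exists>T. openin (subtopology (discrete_sequences E) S) T \<and> x \<in> T
        \<and> T \<subseteq> {x \<in> topspace (subtopology (discrete_sequences E) S). f x \<in> U}"
      by (intro exI[of _ "{y \<in> S. \<forall>j<n. y j = x j}"]) auto
  qed
qed

lemma continuous_map_discrete_sequences_discrete:
  assumes "S \<subseteq> topspace (discrete_sequences E)" and "f \<in> S \<rightarrow> T"
    and "\<And>x. x \<in> S \<Longrightarrow> \<exists>n. \<forall>y\<in>S. (\<forall>j<n. y j = x j) \<longrightarrow> f y = f x"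
  shows "continuous_map (subtopology (discrete_sequences E) S) (discrete_topology T) f"
proof (rule continuous_map_discrete_sequences[OF assms(1)])
  show "f \<in> S \<rightarrow> topspace (discrete_topology T)" using assms(2) by simp
  fix x U assume "x \<in> S" "f x \<in> U"
  obtain n where n: "\<forall>y\<in>S. (\<forall>j<n. y j = x j) \<longrightarrow> f y = f x" using assms(3)[OF \<open>x \<in> S\<close>] by blast
  show "\<exists>n. \<forall>y\<in>S. (\<forall>j<n. y j = x j) \<longrightarrow> f y \<in> U"
    using n \<open>f x \<in> U\<close> by (intro exI[of _ n]) simp
qed

lemma continuous_map_discrete_sequences_real:
  assumes "S \<subseteq> topspace (discrete_sequences E)"
    and "\<And>x \<epsilon>. x \<in> S \<Longrightarrow> \<epsilon> > 0 \<Longrightarrow> \<exists>n. \<forall>y\<in>S. (\<forall>j<n. y j = x j) \<longrightarrow> \<bar>g y - g x\<bar> < \<epsilon>"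
  shows "continuous_map (subtopology (discrete_sequences E) S) euclideanreal g"
proof (rule continuous_map_discrete_sequences[OF assms(1)])
  fix x U assume "x \<in> S" "openin euclideanreal U" "g x \<in> U"
  then obtain \<epsilon> where \<epsilon>: "\<epsilon> > 0" "\<And>y. \<bar>y - g x\<bar> < \<epsilon> \<Longrightarrow> y \<in> U" by (auto simp: open_real)
  obtain n where n: "\<forall>y\<in>S. (\<forall>j<n. y j = x j) \<longrightarrow> \<bar>g y - g x\<bar> < \<epsilon>"
    using assms(2)[OF \<open>x \<in> S\<close> \<epsilon>(1)] by blast
  show "\<exists>n. \<forall>y\<in>S. (\<forall>j<n. y j = x j) \<longrightarrow> g y \<in> U"
    using n \<epsilon>(2) by (intro exI[of _ n]) simp
qed simp

abbreviation edge_sequences :: "nat \<Rightarrow> (nat \<Rightarrow> nat \<Rightarrow> nat) \<Rightarrow> (nat \<Rightarrow> edge) topology" where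
  "edge_sequences N A \<equiv> discrete_sequences (edges N A)"

lemma finite_edges: "finite (edges N A)"
proof -
  have "edges N A = (\<Union>i<N. \<Union>j<N. (\<lambda>m. (i, j, m)) ` {..<A i j})"
    by (auto simp: edges_def)
  then show ?thesis by simp
qed

lemma EAinf_subset_topspace: "EAinf N A \<subseteq> topspace (edge_sequences N A)"
  by (auto simp: EAinf_def)

lemma topspace_EAtop: "topspace (EAtop N A) = EAinf N A"
  unfolding EAtop_def topspace_subtopology using EAinf_subset_topspace by blast

lemma topspace_limit_space: "topspace (limit_space N A B) = aeclass N A B ` EAinf N A"
  unfolding limit_space_def topspace_quotient_topology topspace_EAtop ..

lemma quotient_map_aeclass: "quotient_map (EAtop N A) (limit_space N A B) (aeclass N A B)"
  unfolding limit_space_def by (rule quotient_map_quotient_topology)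

definition class_fibre :: "nat \<Rightarrow> (nat \<Rightarrow> nat \<Rightarrow> nat) \<Rightarrow> (nat \<Rightarrow> nat \<Rightarrow> int) \<Rightarrow>
    (nat \<Rightarrow> nat \<times> nat) \<Rightarrow> (nat \<Rightarrow> edge) set set" where
  "class_fibre N A B v = {c \<in> topspace (limit_space N A B). piJ c = v}"

abbreviation over_sequences :: "nat \<Rightarrow> (nat \<Rightarrow> nat \<Rightarrow> nat) \<Rightarrow> (nat \<Rightarrow> nat \<times> nat) \<Rightarrow> (nat \<Rightarrow> edge) set" where
  "over_sequences N A v \<equiv> {x \<in> topspace (edge_sequences N A). \<forall>n. piE x n = v n}"

lemma closedin_over_sequences: "closedin (edge_sequences N A) (over_sequences N A v)"
proof -
  have "closedin (edge_sequences N A) {x \<in> topspace (edge_sequences N A). x n \<in> {e \<in> edges N A. edge_ends e = v n}}" for n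
    by (rule closedin_continuous_map_preimage[OF continuous_map_product_projection]) auto
  then have "closedin (edge_sequences N A)
      (\<Inter>n. {x \<in> topspace (edge_sequences N A). x n \<in> {e \<in> edges N A. edge_ends e = v n}})"
    by (intro closedin_Inter) auto
  moreover have "(\<Inter>n. {x \<in> topspace (edge_sequences N A). x n \<in> {e \<in> edges N A. edge_ends e = v n}})
      = over_sequences N A v"
    by (auto simp: piE_def edge_ends_def PiE_iff)
  ultimately show ?thesis by simp
qed

lemma path_fibre_eq_over_sequences:
  assumes "v \<in> ECinf N A"
  shows "path_fibre N A v = over_sequences N A v"
proof -
  have "x \<in> EAinf N A" if "\<forall>n. x n \<in> edges N A" "\<forall>n. piE x n = v n" for x
    using that assms by (auto simp: EAinf_def ECinf_def piE_def prod_eq_iff)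
  then show ?thesis by (auto simp: path_fibre_def fun_eq_iff PiE_iff EAinf_in_edges)
qed

lemma closedin_path_fibre: "closedin (EAtop N A) (path_fibre N A v)"
proof -
  have "path_fibre N A v = EAinf N A \<inter> over_sequences N A v"
    using EAinf_subset_topspace by (auto simp: path_fibre_def)
  then show ?thesis
    unfolding EAtop_def using closedin_subtopology_Int_closed[OF closedin_over_sequences] by simp
qed

lemma fibreE_eq_EAtop: "fibreE N A v = subtopology (EAtop N A) (path_fibre N A v)"
  by (simp add: fibreE_def path_fibre_def)

lemma fibreE_eq: "fibreE N A v = subtopology (edge_sequences N A) (path_fibre N A v)"
  unfolding fibreE_eq_EAtop EAtop_def subtopology_subtopology
  by (metis (no_types, lifting) Int_absorb1 mem_Collect_eq path_fibre_def subsetI)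

lemma topspace_fibreE: "topspace (fibreE N A v) = path_fibre N A v"
  unfolding fibreE_eq using EAinf_subset_topspace by (auto simp: path_fibre_def)

lemma compact_fibreE: "v \<in> ECinf N A \<Longrightarrow> compact_space (fibreE N A v)"
  unfolding fibreE_eq path_fibre_eq_over_sequences
  by (intro compact_space_subtopology closedin_compact_space closedin_over_sequences)
    (simp_all add: compact_space_product_topology compact_space_discrete_topology finite_edges)

lemma fibreJ_eq: "fibreJ N A B v = subtopology (limit_space N A B) (class_fibre N A B v)"
  by (simp add: fibreJ_def class_fibre_def)

lemma preimage_class_fibre:
  "{x \<in> topspace (EAtop N A). aeclass N A B x \<in> class_fibre N A B v} = path_fibre N A v"
  by (auto simp: class_fibre_def topspace_EAtop topspace_limit_space piJ_aeclass path_fibre_def)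

lemma closedin_class_fibre: "closedin (limit_space N A B) (class_fibre N A B v)"
proof -
  have "class_fibre N A B v \<subseteq> topspace (limit_space N A B)" by (auto simp: class_fibre_def)
  then have "closedin (EAtop N A) {x \<in> topspace (EAtop N A). aeclass N A B x \<in> class_fibre N A B v}
      = closedin (limit_space N A B) (class_fibre N A B v)"
    using quotient_map_aeclass[of N A B] unfolding quotient_map_closedin by blast
  then show ?thesis using closedin_path_fibre unfolding preimage_class_fibre by simp
qed

lemma quotient_map_fibre: "quotient_map (fibreE N A v) (fibreJ N A B v) (aeclass N A B)"
  unfolding fibreE_eq_EAtop fibreJ_eq
  by (rule quotient_map_restriction[OF quotient_map_aeclass preimage_class_fibre])
    (simp add: closedin_class_fibre)

lemma topspace_fibreJ: "topspace (fibreJ N A B v) = aeclass N A B ` path_fibre N A v"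
  using quotient_imp_surjective_map[OF quotient_map_fibre] topspace_fibreE by metis

lemma compact_fibreJ: "v \<in> ECinf N A \<Longrightarrow> compact_space (fibreJ N A B v)"
  using image_compactin[OF compact_fibreE[unfolded compact_space_def]
      quotient_imp_continuous_map[OF quotient_map_fibre]]
    quotient_imp_surjective_map[OF quotient_map_fibre] unfolding compact_space_def by metis

lemma class_rep_fibreJ:
  assumes "c \<in> topspace (fibreJ N A B v)"
  shows "class_rep c \<in> path_fibre N A v" and "aeclass N A B (class_rep c) = c"
proof -
  obtain x where x: "x \<in> path_fibre N A v" and c: "c = aeclass N A B x"
    using assms topspace_fibreJ by blast
  have ae: "ae_rel N A B x (class_rep c)" using class_rep_aeclass[OF path_fibreD(1)[OF x]] c by simp
  then show "class_rep c \<in> path_fibre N A v" using ae_rel_path_fibre[OF x] by blast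
  show "aeclass N A B (class_rep c) = c"
    using aeclass_eq_iff[OF path_fibreD(1)[OF x]] ae c by blast
qed

section \<open>The fibres of the limit space\<close>

lemma class_rep_aeclass_Kv_infinity:
  assumes "Kv B v = \<infinity>" and "x \<in> path_fibre N A v"
  shows "class_rep (aeclass N A B x) = x"
  using ae_rel_Kv_infinity[OF assms class_rep_aeclass[OF path_fibreD(1)[OF assms(2)]]] .

lemma homeomorphic_map_fibre_Kv_infinity:
  assumes "Kv B v = \<infinity>"
  shows "homeomorphic_map (fibreJ N A B v) (fibreE N A v) class_rep"
proof -
  have "homeomorphic_maps (fibreE N A v) (fibreJ N A B v) (aeclass N A B) class_rep"
    unfolding homeomorphic_maps_def
  proof (intro conjI ballI)
    show "continuous_map (fibreE N A v) (fibreJ N A B v) (aeclass N A B)"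
      by (rule quotient_imp_continuous_map[OF quotient_map_fibre])
    show "continuous_map (fibreJ N A B v) (fibreE N A v) class_rep"
      by (rule continuous_compose_quotient_map[OF quotient_map_fibre], rule continuous_map_eq[OF continuous_map_id])
        (simp add: topspace_fibreE class_rep_aeclass_Kv_infinity[OF assms])
    show "class_rep (aeclass N A B x) = x" if "x \<in> topspace (fibreE N A v)" for x
      using class_rep_aeclass_Kv_infinity[OF assms] that by (simp add: topspace_fibreE)
    show "aeclass N A B (class_rep c) = c" if "c \<in> topspace (fibreJ N A B v)" for c
      by (rule class_rep_fibreJ(2)[OF that])
  qed
  then show ?thesis using homeomorphic_maps_map by blast
qed

lemma class_rep_sigJ_Kv_infinity:
  assumes "Kv B v = \<infinity>" and "c \<in> topspace (fibreJ N A B v)"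
  shows "class_rep (sigJ N A B c) = shift (class_rep c)"
  unfolding sigJ_eq
  by (rule class_rep_aeclass_Kv_infinity[OF Kv_shift_infinity[OF assms(1)]
        shift_path_fibre[OF class_rep_fibreJ(1)[OF assms(2)]]])

lemma cis_2pi_eq_iff: "cis (2 * pi * d) = cis (2 * pi * e) \<longleftrightarrow> d - e \<in> \<int>"
proof -
  have "cis (2 * pi * d) = cis (2 * pi * e) \<longleftrightarrow> sin (2 * pi * d) = sin (2 * pi * e) \<and> cos (2 * pi * d) = cos (2 * pi * e)"
    by (auto simp: complex_eq_iff)
  also have "\<dots> \<longleftrightarrow> (\<exists>n::int. 2 * pi * d = 2 * pi * e + 2 * pi * n)"
    by (rule sin_cos_eq_iff)
  also have "\<dots> \<longleftrightarrow> (\<exists>n::int. d - e = n)"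
    by (intro ex_cong1) (simp only: distrib_left[symmetric] mult_cancel_left, simp add: algebra_simps)
  finally show ?thesis by (auto elim: Ints_cases)
qed

lemma continuous_map_expansion:
  assumes "supA A v = \<infinity>"
  shows "continuous_map (fibreE N A v) euclideanreal (expansion A)"
  unfolding fibreE_eq
proof (rule continuous_map_discrete_sequences_real)
  show "path_fibre N A v \<subseteq> topspace (edge_sequences N A)"
    using EAinf_subset_topspace by (auto simp: path_fibre_def)
  fix x \<epsilon> assume x: "x \<in> path_fibre N A v" and "(0::real) < \<epsilon>"
  have "\<forall>M. \<exists>n. M < fibre_weight A v n" using assms supA_eq_infinity_iff by blast
  from unbounded_imp_inverse_small[OF this \<open>0 < \<epsilon>\<close>, of 1]
  obtain n where n: "1 / fibre_weight A v n < \<epsilon>" by blast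
  show "\<exists>n. \<forall>y\<in>path_fibre N A v. (\<forall>j<n. y j = x j) \<longrightarrow> \<bar>expansion A y - expansion A x\<bar> < \<epsilon>"
  proof (intro exI[of _ "Suc n"] ballI impI)
    fix y assume "y \<in> path_fibre N A v" and "\<forall>j<Suc n. y j = x j"
    then have "finpref y n = finpref x n" by (simp add: finpref_eq_iff)
    with expansion_diff_approx[OF x \<open>y \<in> path_fibre N A v\<close>, of n] n
    show "\<bar>expansion A y - expansion A x\<bar> < \<epsilon>" by simp
  qed
qed

lemma floor_mult_digit_bounds:
  fixes u :: real and a :: nat
  assumes "0 < a"
  shows "0 \<le> \<lfloor>a * u\<rfloor> - int a * \<lfloor>u\<rfloor> \<and> \<lfloor>a * u\<rfloor> - int a * \<lfloor>u\<rfloor> < int a"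
proof -
  have "real_of_int (int a * \<lfloor>u\<rfloor>) \<le> a * u"
    using assms by (simp add: mult_left_mono)
  then have "int a * \<lfloor>u\<rfloor> \<le> \<lfloor>a * u\<rfloor>" by (simp add: le_floor_iff)
  moreover have "a * u < a * (real_of_int \<lfloor>u\<rfloor> + 1)"
    using assms by (simp add: real_of_int_floor_add_one_gt)
  then have "real_of_int \<lfloor>a * u\<rfloor> < real_of_int (int a * \<lfloor>u\<rfloor> + int a)"
    by (simp add: algebra_simps) (meson of_int_floor_le le_less_trans)
  ultimately show ?thesis by linarith
qed

text \<open>The digits of \<open>\<theta>\<close> in the mixed radix given by the entries of \<open>A\<close> along \<open>v\<close>.\<close>

definition greedy_lift :: "(nat \<Rightarrow> nat \<Rightarrow> nat) \<Rightarrow> (nat \<Rightarrow> nat \<times> nat) \<Rightarrow> real \<Rightarrow> nat \<Rightarrow> edge" where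
  "greedy_lift A v \<theta> n = (fst (v n), snd (v n),
     nat (\<lfloor>\<theta> * real (fibre_weight A v n)\<rfloor>
       - int (A (fst (v n)) (snd (v n))) * \<lfloor>\<theta> * real (\<Prod>i<n. A (fst (v i)) (snd (v i)))\<rfloor>))"

lemma greedy_lift:
  assumes v: "v \<in> ECinf N A" and \<theta>: "0 \<le> \<theta>" "\<theta> < 1"
  shows "greedy_lift A v \<theta> \<in> path_fibre N A v"
    and "path_value A (finpref (greedy_lift A v \<theta>) n) = \<lfloor>\<theta> * real (fibre_weight A v n)\<rfloor>"
proof -
  define a where "a n = A (fst (v n)) (snd (v n))" for n
  define d where "d n = \<lfloor>real (a n) * (\<theta> * real (\<Prod>i<n. a i))\<rfloor> - int (a n) * \<lfloor>\<theta> * real (\<Prod>i<n. a i)\<rfloor>" for n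
  have a: "0 < a n" for n using v by (simp add: ECinf_def a_def)
  have d: "0 \<le> d n \<and> d n < a n" for n
    unfolding d_def using floor_mult_digit_bounds[OF a] by simp
  have lift: "greedy_lift A v \<theta> n = (fst (v n), snd (v n), nat (d n))" for n
    by (simp add: greedy_lift_def d_def a_def fibre_weight_def algebra_simps)
  show "greedy_lift A v \<theta> \<in> path_fibre N A v"
    using v d unfolding path_fibre_eq_over_sequences[OF v]
    by (auto simp: lift piE_def er_def es_def edges_def ECinf_def a_def PiE_iff nat_less_iff)
  show "path_value A (finpref (greedy_lift A v \<theta>) n) = \<lfloor>\<theta> * real (fibre_weight A v n)\<rfloor>"
  proof (induction n)
    case 0
    have "\<lfloor>\<theta>\<rfloor> = 0" using \<theta> by (simp add: floor_eq_iff)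
    with d[of 0] show ?case by (simp add: lift edge_digit_def d_def a_def fibre_weight_def mult.commute)
  next
    case (Suc n)
    with d[of "Suc n"] show ?case
      by (simp add: finpref_Suc lift edge_digit_def er_def es_def d_def a_def fibre_weight_def algebra_simps)
  qed
qed

lemma expansion_greedy_lift:
  assumes v: "v \<in> ECinf N A" and unbounded: "supA A v = \<infinity>" and \<theta>: "0 \<le> \<theta>" "\<theta> < 1"
  shows "expansion A (greedy_lift A v \<theta>) = \<theta>"
proof -
  define x where "x = greedy_lift A v \<theta>"
  have x: "x \<in> path_fibre N A v" using greedy_lift(1)[OF v \<theta>] by (simp add: x_def)
  have "\<bar>expansion A x - \<theta>\<bar> \<le> 1 / fibre_weight A v n" for n
  proof -
    define W where "W = real (fibre_weight A v n)"
    have W: "0 < W" unfolding W_def using fibre_weight_pos[OF x] by (simp only: of_nat_0_less_iff)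
    have "path_value A (finpref x n) = \<lfloor>\<theta> * W\<rfloor>"
      using greedy_lift(2)[OF v \<theta>, of n] by (simp add: x_def W_def)
    moreover have "path_value A (finpref x n) / W \<le> expansion A x"
      "expansion A x \<le> path_value A (finpref x n) / W + 1 / W"
      using expansion_bounds[OF path_fibreD(1)[OF x], of n] path_weight_path_fibre[OF x]
      by (simp_all add: W_def)
    moreover have "\<lfloor>\<theta> * W\<rfloor> / W \<le> \<theta>" "\<theta> < \<lfloor>\<theta> * W\<rfloor> / W + 1 / W"
      using W of_int_floor_le[of "\<theta> * W"] real_of_int_floor_add_one_gt[of "\<theta> * W"]
      by (simp_all add: divide_le_eq less_divide_eq add_divide_distrib[symmetric])
    ultimately show ?thesis unfolding W_def[symmetric] abs_le_iff by simp
  qed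
  then have "expansion A x - \<theta> = 0"
    using unbounded supA_eq_infinity_iff by (intro eq_0_if_le_inverse_unbounded[where C = 1]) auto
  then show ?thesis by (simp add: x_def)
qed

definition circle_coord :: "(nat \<Rightarrow> nat \<Rightarrow> nat) \<Rightarrow> (nat \<Rightarrow> edge) set \<Rightarrow> complex" where
  "circle_coord A c = cis (2 * pi * expansion A (class_rep c))"

lemma circle_coord_aeclass:
  assumes v: "v \<in> ECinf N A" and B01: "\<forall>i<N. \<forall>j<N. B i j \<in> {0, 1}" and K: "Kv B v = 0"
    and unbounded: "supA A v = \<infinity>" and x: "x \<in> path_fibre N A v"
  shows "circle_coord A (aeclass N A B x) = cis (2 * pi * expansion A x)"
proof -
  have ae: "ae_rel N A B x (class_rep (aeclass N A B x))"
    by (rule class_rep_aeclass[OF path_fibreD(1)[OF x]])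
  then have "class_rep (aeclass N A B x) \<in> path_fibre N A v" by (rule ae_rel_path_fibre[OF x])
  with ae have "expansion A (class_rep (aeclass N A B x)) - expansion A x \<in> \<int>"
    using ae_rel_iff_expansion_diff_Ints[OF v B01 K unbounded x] by blast
  then show ?thesis by (simp add: circle_coord_def cis_2pi_eq_iff)
qed

lemma continuous_map_circle_coord:
  assumes v: "v \<in> ECinf N A" and B01: "\<forall>i<N. \<forall>j<N. B i j \<in> {0, 1}" and K: "Kv B v = 0"
    and unbounded: "supA A v = \<infinity>"
  shows "continuous_map (fibreJ N A B v) (top_of_set (sphere 0 1)) (circle_coord A)"
proof -
  have "continuous_map (fibreE N A v) euclidean (\<lambda>x. cis (2 * pi * expansion A x))"
    using continuous_map_compose[OF continuous_map_expansion[OF unbounded],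
        of euclidean "\<lambda>r. cis (2 * pi * r)"]
    by (simp add: o_def continuous_map_iff_continuous2 continuous_on_cis continuous_intros)
  then have "continuous_map (fibreE N A v) (top_of_set (sphere 0 1)) (circle_coord A \<circ> aeclass N A B)"
    by (auto simp: continuous_map_in_subtopology topspace_fibreE circle_coord_aeclass[OF v B01 K unbounded]
        intro: continuous_map_eq)
  then show ?thesis by (rule continuous_compose_quotient_map[OF quotient_map_fibre])
qed

lemma circle_coord_image:
  assumes v: "v \<in> ECinf N A" and B01: "\<forall>i<N. \<forall>j<N. B i j \<in> {0, 1}" and K: "Kv B v = 0"
    and unbounded: "supA A v = \<infinity>"
  shows "circle_coord A ` topspace (fibreJ N A B v) = sphere 0 1"
proof -
  have "z \<in> circle_coord A ` topspace (fibreJ N A B v)" if "norm z = 1" for z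
  proof -
    define \<theta> where "\<theta> = Arg2pi z / (2 * pi)"
    have \<theta>: "0 \<le> \<theta>" "\<theta> < 1" using Arg2pi[of z] by (auto simp: \<theta>_def divide_simps)
    have "z = cis (2 * pi * \<theta>)"
      using Arg2pi_eq[of z] that by (simp add: cis_conv_exp \<theta>_def)
    also have "\<dots> = circle_coord A (aeclass N A B (greedy_lift A v \<theta>))"
      using circle_coord_aeclass[OF v B01 K unbounded greedy_lift(1)[OF v \<theta>]]
        expansion_greedy_lift[OF v unbounded \<theta>] by simp
    finally show ?thesis using greedy_lift(1)[OF v \<theta>] by (auto simp: topspace_fibreJ)
  qed
  then show ?thesis by (auto simp: circle_coord_def)
qed

lemma inj_on_circle_coord:
  assumes v: "v \<in> ECinf N A" and B01: "\<forall>i<N. \<forall>j<N. B i j \<in> {0, 1}" and K: "Kv B v = 0"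
    and unbounded: "supA A v = \<infinity>"
  shows "inj_on (circle_coord A) (topspace (fibreJ N A B v))"
proof (rule inj_onI)
  fix c d assume "c \<in> topspace (fibreJ N A B v)" "d \<in> topspace (fibreJ N A B v)"
    and eq: "circle_coord A c = circle_coord A d"
  then obtain x y where x: "x \<in> path_fibre N A v" "c = aeclass N A B x"
    and y: "y \<in> path_fibre N A v" "d = aeclass N A B y"
    by (auto simp: topspace_fibreJ)
  with eq circle_coord_aeclass[OF v B01 K unbounded] have "expansion A y - expansion A x \<in> \<int>"
    by (simp add: cis_2pi_eq_iff Ints_minus[of "expansion A x - expansion A y", simplified])
  with x y show "c = d"
    using ae_rel_iff_expansion_diff_Ints[OF v B01 K unbounded x(1) y(1)]
      aeclass_eq_iff[OF path_fibreD(1)[OF x(1)]] by blast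
qed

lemma homeomorphic_map_fibre_circle:
  assumes v: "v \<in> ECinf N A" and B01: "\<forall>i<N. \<forall>j<N. B i j \<in> {0, 1}" and K: "Kv B v = 0"
    and unbounded: "supA A v = \<infinity>"
  shows "homeomorphic_map (fibreJ N A B v) (top_of_set (sphere (0::complex) 1)) (circle_coord A)"
  using compact_fibreJ[OF v] Hausdorff_space_subtopology[OF Hausdorff_space_euclidean]
    continuous_map_circle_coord[OF assms] circle_coord_image[OF assms] inj_on_circle_coord[OF assms]
  by (intro continuous_imp_homeomorphic_map) auto

lemma circle_coord_sigJ:
  assumes v: "v \<in> ECinf N A" and B01: "\<forall>i<N. \<forall>j<N. B i j \<in> {0, 1}" and K: "Kv B v = 0"
    and unbounded: "supA A v = \<infinity>" and c: "c \<in> topspace (fibreJ N A B v)"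
  shows "circle_coord A (sigJ N A B c) = circle_coord A c ^ A (fst (v 0)) (snd (v 0))"
proof -
  define x where "x = class_rep c"
  define a where "a = A (fst (v 0)) (snd (v 0))"
  have x: "x \<in> path_fibre N A v" using class_rep_fibreJ(1)[OF c] by (simp add: x_def)
  have "circle_coord A (sigJ N A B c) = cis (2 * pi * expansion A (shift x))"
    unfolding sigJ_eq x_def[symmetric]
    by (rule circle_coord_aeclass[OF ECinf_shift[OF v] B01 _ supA_shift[OF v unbounded] shift_path_fibre[OF x]])
      (use K in \<open>simp add: Kv_eq_0_iff shift_def\<close>)
  also have "\<dots> = cis (2 * pi * (a * expansion A x) - 2 * pi * edge_digit (x 0))"
    using expansion_shift[OF path_fibreD(1)[OF x]] path_fibreD[OF x]
    by (simp add: a_def right_diff_distrib)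
  also have "\<dots> = cis (2 * pi * (a * expansion A x))"
    by (simp add: cis_divide[symmetric])
  also have "\<dots> = cis (2 * pi * expansion A x) ^ a"
    unfolding Complex.DeMoivre by (simp only: ac_simps)
  finally show ?thesis by (simp add: circle_coord_def x_def a_def)
qed

lemma fibre_singleton:
  assumes v: "v \<in> ECinf N A" and B01: "\<forall>i<N. \<forall>j<N. B i j \<in> {0, 1}" and K: "Kv B v = 0"
    and bounded: "supA A v < \<infinity>"
  shows "topspace (fibreJ N A B v) = {aeclass N A B (zero_lift v)}"
proof -
  have z: "zero_lift v \<in> path_fibre N A v" by (rule zero_lift_path_fibre[OF v])
  have "aeclass N A B x = aeclass N A B (zero_lift v)" if "x \<in> path_fibre N A v" for x
    using ae_rel_supA_finite[OF v B01 K bounded that z] aeclass_eq_iff[OF path_fibreD(1)[OF that]] by blast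
  then show ?thesis unfolding topspace_fibreJ using z by blast
qed

lemma Hausdorff_fibre_Kv_0:
  assumes v: "v \<in> ECinf N A" and B01: "\<forall>i<N. \<forall>j<N. B i j \<in> {0, 1}" and K: "Kv B v = 0"
  shows "Hausdorff_space (fibreJ N A B v)"
proof (cases "supA A v = \<infinity>")
  case True
  then show ?thesis
    using homeomorphic_map_fibre_circle[OF v B01 K True] homeomorphic_space homeomorphic_Hausdorff_space
      Hausdorff_space_subtopology[OF Hausdorff_space_euclidean] by blast
next
  case False
  then have "supA A v < \<infinity>" by (cases "supA A v") auto
  then show ?thesis
    using fibre_singleton[OF v B01 K] by (simp add: Hausdorff_space_def)
qed

definition split_coord :: "nat \<Rightarrow> (nat \<Rightarrow> nat \<Rightarrow> nat) \<Rightarrow> (nat \<Rightarrow> nat \<Rightarrow> int) \<Rightarrow> nat \<Rightarrow>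
    (nat \<Rightarrow> edge) set \<Rightarrow> (nat \<Rightarrow> edge) set \<times> edge list" where
  "split_coord N A B K c = (aeclass N A B ((shift ^^ K) (class_rep c)), rev (map (class_rep c) [0..<K]))"

lemma split_coord_aeclass:
  assumes K: "Kv B v = enat (Suc k)" and x: "x \<in> path_fibre N A v"
  shows "split_coord N A B (Suc k) (aeclass N A B x)
    = (aeclass N A B ((shift ^^ Suc k) x), rev (map x [0..<Suc k]))"
proof -
  define r where "r = class_rep (aeclass N A B x)"
  have ae: "ae_rel N A B x r" using class_rep_aeclass[OF path_fibreD(1)[OF x]] by (simp add: r_def)
  with ae_rel_Kv_Suc_iff[OF K x ae_rel_path_fibre[OF x ae]]
  have prefix: "\<forall>j\<le>k. x j = r j" and tail: "ae_rel N A B ((shift ^^ Suc k) x) ((shift ^^ Suc k) r)"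
    by blast+
  have "aeclass N A B ((shift ^^ Suc k) r) = aeclass N A B ((shift ^^ Suc k) x)"
    using aeclass_eq_iff[OF funpow_shift_EAinf[OF path_fibreD(1)[OF x]]] tail by metis
  moreover have "map r [0..<Suc k] = map x [0..<Suc k]"
    using prefix by (simp add: map_eq_conv less_Suc_eq_le del: upt_Suc)
  ultimately show ?thesis by (simp add: split_coord_def r_def[symmetric] del: funpow.simps upt_Suc)
qed

lemma prefix_in_Pv: "x \<in> path_fibre N A v \<Longrightarrow> rev (map x [0..<K]) \<in> Pv N A K v"
  by (auto simp: Pv_def rev_map path_fibreD EAinf_in_edges)

lemma continuous_map_funpow_shift_fibreE:
  "continuous_map (fibreE N A v) (fibreE N A ((shift ^^ K) v)) (shift ^^ K)"
  unfolding fibreE_eq continuous_map_in_subtopology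
proof
  have "path_fibre N A v \<subseteq> topspace (edge_sequences N A)"
    using EAinf_subset_topspace by (auto simp: path_fibre_def)
  then have "continuous_map (subtopology (edge_sequences N A) (path_fibre N A v))
      (discrete_topology (edges N A)) (\<lambda>x. x (k + K))" for k
    by (rule continuous_map_discrete_sequences_discrete)
      (auto simp: path_fibreD EAinf_in_edges intro!: exI[of _ "Suc (k + K)"])
  then show "continuous_map (subtopology (edge_sequences N A) (path_fibre N A v)) (edge_sequences N A) (shift ^^ K)"
    by (simp add: continuous_map_componentwise_UNIV funpow_shift)
  show "shift ^^ K \<in> topspace (subtopology (edge_sequences N A) (path_fibre N A v))
      \<rightarrow> path_fibre N A ((shift ^^ K) v)"
    using funpow_shift_path_fibre by (auto simp: topspace_subtopology)
qed

lemma continuous_map_prefix: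
  "continuous_map (fibreE N A v) (discrete_topology (Pv N A K v)) (\<lambda>x. rev (map x [0..<K]))"
  unfolding fibreE_eq
  by (rule continuous_map_discrete_sequences_discrete)
    (use EAinf_subset_topspace prefix_in_Pv in \<open>auto simp: path_fibre_def map_eq_conv intro!: exI[of _ K]\<close>)

lemma path_fibre_prepend:
  assumes v: "v \<in> ECinf N A" and z: "z \<in> path_fibre N A ((shift ^^ K) v)" and \<mu>: "\<mu> \<in> Pv N A K v"
  shows "\<exists>x\<in>path_fibre N A v. (shift ^^ K) x = z \<and> rev (map x [0..<K]) = \<mu>"
proof -
  have \<mu>: "length \<mu> = K" "set \<mu> \<subseteq> edges N A" "map (\<lambda>e. (er e, es e)) \<mu> = rev (map v [0..<K])"
    using \<mu> by (auto simp: Pv_def)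
  define x where "x j = (if j < K then \<mu> ! (K - 1 - j) else z (j - K))" for j
  have "x j \<in> edges N A \<and> piE x j = v j" for j
  proof (cases "j < K")
    case True
    have "map (\<lambda>e. (er e, es e)) \<mu> ! (K - 1 - j) = rev (map v [0..<K]) ! (K - 1 - j)"
      using \<mu>(3) by simp
    then have "(er (\<mu> ! (K - 1 - j)), es (\<mu> ! (K - 1 - j))) = v j"
      using True \<mu>(1) by (simp add: rev_nth)
    moreover have "\<mu> ! (K - 1 - j) \<in> set \<mu>" using True \<mu>(1) by simp
    ultimately show ?thesis using True \<mu>(2) by (auto simp: x_def piE_def)
  next
    case False
    with path_fibreD(2,3)[OF z, of "j - K"] EAinf_in_edges[OF path_fibreD(1)[OF z], of "j - K"]
    show ?thesis
      by (simp add: x_def piE_def EAinf_in_edges funpow_shift)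
  qed
  then have "x \<in> path_fibre N A v"
    unfolding path_fibre_eq_over_sequences[OF v] by (simp add: PiE_iff)
  moreover have "(shift ^^ K) x = z" by (simp add: funpow_shift x_def fun_eq_iff)
  moreover have "rev (map x [0..<K]) = \<mu>"
    by (rule nth_equalityI) (simp_all add: \<mu>(1) rev_nth x_def)
  ultimately show ?thesis by blast
qed

lemma continuous_map_split_coord:
  assumes K: "Kv B v = enat (Suc k)"
  shows "continuous_map (fibreJ N A B v)
    (prod_topology (fibreJ N A B ((shift ^^ Suc k) v)) (discrete_topology (Pv N A (Suc k) v)))
    (split_coord N A B (Suc k))"
proof -
  have "continuous_map (fibreE N A v) (prod_topology (fibreJ N A B ((shift ^^ Suc k) v)) (discrete_topology (Pv N A (Suc k) v)))
      (\<lambda>x. (aeclass N A B ((shift ^^ Suc k) x), rev (map x [0..<Suc k])))"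
    unfolding continuous_map_pairwise o_def
    using continuous_map_compose[OF continuous_map_funpow_shift_fibreE
        quotient_imp_continuous_map[OF quotient_map_fibre]] continuous_map_prefix
    by (simp add: o_def del: funpow.simps upt_Suc)
  then have "continuous_map (fibreE N A v) (prod_topology (fibreJ N A B ((shift ^^ Suc k) v)) (discrete_topology (Pv N A (Suc k) v)))
      (split_coord N A B (Suc k) \<circ> aeclass N A B)"
    by (rule continuous_map_eq) (simp add: topspace_fibreE split_coord_aeclass[OF K] del: funpow.simps upt_Suc)
  then show ?thesis by (rule continuous_compose_quotient_map[OF quotient_map_fibre])
qed

lemma split_coord_image:
  assumes v: "v \<in> ECinf N A" and K: "Kv B v = enat (Suc k)"
  shows "split_coord N A B (Suc k) ` topspace (fibreJ N A B v)
    = topspace (fibreJ N A B ((shift ^^ Suc k) v)) \<times> Pv N A (Suc k) v"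
proof
  show "split_coord N A B (Suc k) ` topspace (fibreJ N A B v)
      \<subseteq> topspace (fibreJ N A B ((shift ^^ Suc k) v)) \<times> Pv N A (Suc k) v"
    using funpow_shift_path_fibre prefix_in_Pv
    by (auto simp: topspace_fibreJ split_coord_aeclass[OF K] simp del: funpow.simps upt_Suc)
  show "topspace (fibreJ N A B ((shift ^^ Suc k) v)) \<times> Pv N A (Suc k) v
      \<subseteq> split_coord N A B (Suc k) ` topspace (fibreJ N A B v)"
  proof
    fix p assume "p \<in> topspace (fibreJ N A B ((shift ^^ Suc k) v)) \<times> Pv N A (Suc k) v"
    then obtain z \<mu> where z: "z \<in> path_fibre N A ((shift ^^ Suc k) v)" and \<mu>: "\<mu> \<in> Pv N A (Suc k) v"
      and p: "p = (aeclass N A B z, \<mu>)" by (auto simp: topspace_fibreJ simp del: funpow.simps)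
    obtain x where "x \<in> path_fibre N A v" "(shift ^^ Suc k) x = z" "rev (map x [0..<Suc k]) = \<mu>"
      using path_fibre_prepend[OF v z \<mu>] by blast
    with p split_coord_aeclass[OF K] show "p \<in> split_coord N A B (Suc k) ` topspace (fibreJ N A B v)"
      by (force simp: topspace_fibreJ simp del: funpow.simps upt_Suc)
  qed
qed

lemma inj_on_split_coord:
  assumes K: "Kv B v = enat (Suc k)"
  shows "inj_on (split_coord N A B (Suc k)) (topspace (fibreJ N A B v))"
proof (rule inj_onI)
  fix c d assume "c \<in> topspace (fibreJ N A B v)" "d \<in> topspace (fibreJ N A B v)"
    and eq: "split_coord N A B (Suc k) c = split_coord N A B (Suc k) d"
  then obtain x y where x: "x \<in> path_fibre N A v" "c = aeclass N A B x"
    and y: "y \<in> path_fibre N A v" "d = aeclass N A B y"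
    by (auto simp: topspace_fibreJ)
  with eq split_coord_aeclass[OF K]
  have "ae_rel N A B ((shift ^^ Suc k) x) ((shift ^^ Suc k) y)" "\<forall>j\<le>k. x j = y j"
    using aeclass_eq_iff[OF funpow_shift_EAinf[OF path_fibreD(1)[OF x(1)]]]
    by (auto simp: map_eq_conv less_Suc_eq_le simp del: funpow.simps upt_Suc)
  with x y show "c = d"
    using ae_rel_Kv_Suc_iff[OF K x(1) y(1)] aeclass_eq_iff[OF path_fibreD(1)[OF x(1)]] by blast
qed

lemma homeomorphic_map_fibre_split:
  assumes v: "v \<in> ECinf N A" and K: "Kv B v = enat (Suc k)"
    and Hausdorff: "Hausdorff_space (fibreJ N A B ((shift ^^ Suc k) v))"
  shows "homeomorphic_map (fibreJ N A B v)
    (prod_topology (fibreJ N A B ((shift ^^ Suc k) v)) (discrete_topology (Pv N A (Suc k) v)))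
    (split_coord N A B (Suc k))"
  using compact_fibreJ[OF v] Hausdorff continuous_map_split_coord[OF K] split_coord_image[OF v K]
    inj_on_split_coord[OF K]
  by (intro continuous_imp_homeomorphic_map) (auto simp: Hausdorff_space_prod_topology)

lemma split_coord_sigJ:
  assumes K: "Kv B v = enat (Suc (Suc k))" and c: "c \<in> topspace (fibreJ N A B v)"
  shows "split_coord N A B (Suc k) (sigJ N A B c)
    = (fst (split_coord N A B (Suc (Suc k)) c), butlast (snd (split_coord N A B (Suc (Suc k)) c)))"
proof -
  define r where "r = class_rep c"
  have r: "r \<in> path_fibre N A v" using class_rep_fibreJ(1)[OF c] by (simp add: r_def)
  have "split_coord N A B (Suc k) (sigJ N A B c)
      = (aeclass N A B ((shift ^^ Suc k) (shift r)), rev (map (shift r) [0..<Suc k]))"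
    unfolding sigJ_eq r_def[symmetric]
    by (rule split_coord_aeclass[OF Kv_shift_Suc[OF K] shift_path_fibre[OF r]])
  also have "(shift ^^ Suc k) (shift r) = (shift ^^ Suc (Suc k)) r"
    by (simp only: funpow_Suc_right o_apply)
  also have "rev (map (shift r) [0..<Suc k]) = butlast (rev (map r [0..<Suc (Suc k)]))"
    by (simp add: butlast_rev butlast_append shift_def map_Suc_upt[symmetric] upt_conv_Cons map_map o_def
        del: upt_Suc)
  finally show ?thesis by (simp add: split_coord_def r_def del: funpow.simps upt_Suc)
qed

lemma sigJ_eq_split_coord:
  assumes "c \<in> topspace (fibreJ N A B v)"
  shows "sigJ N A B c = fst (split_coord N A B 1 c)"
  by (simp add: split_coord_def sigJ_eq)

section \<open>Connected components of the limit space\<close>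

lemma continuous_map_discrete_eq_on_connectedin:
  assumes "continuous_map X (discrete_topology U) f" and "connectedin X S" and "a \<in> S" "b \<in> S"
  shows "f a = f b"
proof -
  obtain z where "f ` S \<subseteq> {z}"
    using connectedin_continuous_map_image[OF assms(1,2)] unfolding connectedin_discrete_topology by blast
  with assms(3,4) show ?thesis by blast
qed

definition point_or_circle :: "'a topology \<Rightarrow> bool" where
  "point_or_circle X \<longleftrightarrow>
    (\<exists>p. topspace X = {p}) \<or> X homeomorphic_space top_of_set (sphere (0::complex) 1)"

lemma connected_space_point_or_circle: "point_or_circle X \<Longrightarrow> connected_space X"
  unfolding point_or_circle_def
proof (elim disjE exE)
  fix p assume "topspace X = {p}"
  then show "connected_space X" using connectedin_topspace[of X] connectedin_sing[of X p] by simp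
next
  assume "X homeomorphic_space top_of_set (sphere (0::complex) 1)"
  moreover have "connected_space (top_of_set (sphere (0::complex) 1))"
    using connected_sphere[of "0::complex" 1] by (simp add: connected_space_subtopology)
  ultimately show "connected_space X" using homeomorphic_connected_space by blast
qed

lemma point_or_circle_homeomorphic_space:
  assumes "X homeomorphic_space Y" and "point_or_circle Y"
  shows "point_or_circle X"
proof -
  obtain f where "homeomorphic_map Y X f"
    using assms(1) homeomorphic_space homeomorphic_space_sym by blast
  then have "topspace X = f ` topspace Y" by (simp add: homeomorphic_imp_surjective_map)
  with assms show ?thesis
    unfolding point_or_circle_def by (metis homeomorphic_space_trans image_empty image_insert)
qed

lemma point_or_circle_component_of_point_or_circle:
  assumes "point_or_circle X" and "C \<in> connected_components_of X"
  shows "point_or_circle (subtopology X C)"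
proof -
  have "C = topspace X"
    using connected_components_of_connected_space[OF connected_space_point_or_circle[OF assms(1)]] assms(2)
    by (auto split: if_splits)
  with assms(1) show ?thesis by simp
qed

lemma point_or_circle_component_homeomorphic_map:
  assumes f: "homeomorphic_map X Y f"
    and Y: "\<forall>D\<in>connected_components_of Y. point_or_circle (subtopology Y D)"
    and C: "C \<in> connected_components_of X"
  shows "point_or_circle (subtopology X C)"
proof -
  have "f ` C \<in> connected_components_of Y"
    using homeomorphic_map_connected_components_of[OF f] C by blast
  moreover have "C \<subseteq> topspace X" by (rule connected_components_of_subset[OF C])
  then have "homeomorphic_map (subtopology X C) (subtopology Y (f ` C)) f"
    using homeomorphic_imp_surjective_map[OF f]
    by (intro homeomorphic_map_subtopologies[OF f]) (auto simp: Int_absorb1 Int_absorb2 image_mono)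
  ultimately show ?thesis
    using Y homeomorphic_space point_or_circle_homeomorphic_space by blast
qed

lemma point_or_circle_component_prod_discrete:
  assumes Y: "point_or_circle Y"
    and C: "C \<in> connected_components_of (prod_topology Y (discrete_topology P))"
  shows "point_or_circle (subtopology (prod_topology Y (discrete_topology P)) C)"
proof -
  obtain D \<mu> where D: "D \<in> connected_components_of Y" and \<mu>: "\<mu> \<in> P" and C: "C = D \<times> {\<mu>}"
    using C by (auto simp: connected_components_of_prod_topology connected_components_of_discrete_topology)
  have "D = topspace Y"
    using connected_components_of_connected_space[OF connected_space_point_or_circle[OF Y]] D
    by (auto split: if_splits)
  then have "subtopology (prod_topology Y (discrete_topology P)) C
      = prod_topology Y (subtopology (discrete_topology P) {\<mu>})"
    by (simp add: C subtopology_Times)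
  moreover have "Y homeomorphic_space prod_topology Y (subtopology (discrete_topology P) {\<mu>})"
    by (rule homeomorphic_space_prod_topology_sing1) (simp add: \<mu>)
  ultimately show ?thesis
    using Y homeomorphic_space_sym point_or_circle_homeomorphic_space by metis
qed

lemma point_or_circle_component_fibreE:
  assumes C: "C \<in> connected_components_of (fibreE N A v)"
  shows "point_or_circle (subtopology (fibreE N A v) C)"
proof -
  have "x n = y n" if "x \<in> C" "y \<in> C" for x y n
  proof (rule continuous_map_discrete_eq_on_connectedin[OF _ connectedin_connected_components_of[OF C] that])
    have "path_fibre N A v \<subseteq> topspace (edge_sequences N A)"
      using EAinf_subset_topspace by (auto simp: path_fibre_def)
    then show "continuous_map (fibreE N A v) (discrete_topology (edges N A)) (\<lambda>x. x n)"
      unfolding fibreE_eq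
      by (rule continuous_map_discrete_sequences_discrete)
        (auto simp: path_fibreD EAinf_in_edges intro!: exI[of _ "Suc n"])
  qed
  moreover obtain p where "p \<in> C" using nonempty_connected_components_of[OF C] by blast
  ultimately have "C = {p}" by (auto simp: fun_eq_iff)
  then show ?thesis
    using connected_components_of_subset[OF C] by (simp add: point_or_circle_def)
qed

lemma point_or_circle_fibre_Kv_0:
  assumes v: "v \<in> ECinf N A" and B01: "\<forall>i<N. \<forall>j<N. B i j \<in> {0, 1}" and K: "Kv B v = 0"
  shows "point_or_circle (fibreJ N A B v)"
proof (cases "supA A v = \<infinity>")
  case True
  then show ?thesis
    using homeomorphic_map_fibre_circle[OF v B01 K True] homeomorphic_space
    by (auto simp: point_or_circle_def)
next
  case False
  then have "supA A v < \<infinity>" by (cases "supA A v") auto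
  then show ?thesis using fibre_singleton[OF v B01 K] by (simp add: point_or_circle_def)
qed

lemma point_or_circle_component_fibreJ:
  assumes v: "v \<in> ECinf N A" and B01: "\<forall>i<N. \<forall>j<N. B i j \<in> {0, 1}"
    and C: "C \<in> connected_components_of (fibreJ N A B v)"
  shows "point_or_circle (subtopology (fibreJ N A B v) C)"
proof -
  consider "Kv B v = \<infinity>" | "Kv B v = 0" | k where "Kv B v = enat (Suc k)"
    using Kv_cases[of B v] by (elim disjE exE) auto
  then show ?thesis
  proof cases
    case 1
    with C show ?thesis
      by (intro point_or_circle_component_homeomorphic_map[OF homeomorphic_map_fibre_Kv_infinity])
        (auto intro: point_or_circle_component_fibreE)
  next
    case 2
    with C show ?thesis
      by (intro point_or_circle_component_of_point_or_circle point_or_circle_fibre_Kv_0[OF v B01])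
  next
    case (3 k)
    define w where "w = (shift ^^ Suc k) v"
    have w: "w \<in> ECinf N A" "Kv B w = 0"
      unfolding w_def by (rule ECinf_funpow_shift[OF v], rule Kv_funpow_shift[OF 3])
    from C show ?thesis
      using homeomorphic_map_fibre_split[OF v 3 Hausdorff_fibre_Kv_0[OF w(1) B01 w(2), unfolded w_def]]
        point_or_circle_component_prod_discrete[OF point_or_circle_fibre_Kv_0[OF w(1) B01 w(2)]]
      by (intro point_or_circle_component_homeomorphic_map) (auto simp: w_def simp del: funpow.simps)
  qed
qed

lemma continuous_map_piJ_coordinate:
  "continuous_map (limit_space N A B) (discrete_topology UNIV) (\<lambda>c. piJ c n)"
proof (rule continuous_compose_quotient_map[OF quotient_map_aeclass])
  have "continuous_map (EAtop N A) (discrete_topology UNIV) (\<lambda>x. piE x n)"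
    unfolding EAtop_def
    by (rule continuous_map_discrete_sequences_discrete[OF EAinf_subset_topspace])
      (auto simp: piE_def intro!: exI[of _ "Suc n"])
  then show "continuous_map (EAtop N A) (discrete_topology UNIV) ((\<lambda>c. piJ c n) \<circ> aeclass N A B)"
    by (rule continuous_map_eq) (simp add: topspace_EAtop piJ_aeclass)
qed

lemma piE_ECinf:
  assumes "x \<in> EAinf N A"
  shows "piE x \<in> ECinf N A"
proof -
  have "er (x n) < N \<and> es (x n) < N \<and> 0 < A (er (x n)) (es (x n))" for n
    using EAinf_in_edges[OF assms, of n] by (cases "x n") (simp add: edges_def er_def es_def)
  with assms show ?thesis by (simp add: ECinf_def piE_def EAinf_def)
qed

lemma connected_component_subset_class_fibre:
  assumes C: "C \<in> connected_components_of (limit_space N A B)" and c: "c \<in> C"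
  shows "C \<subseteq> class_fibre N A B (piJ c)" and "piJ c \<in> ECinf N A"
proof -
  have "piJ d = piJ c" if "d \<in> C" for d
    using continuous_map_discrete_eq_on_connectedin[OF continuous_map_piJ_coordinate
        connectedin_connected_components_of[OF C] that c] by blast
  then show "C \<subseteq> class_fibre N A B (piJ c)"
    using connected_components_of_subset[OF C] by (auto simp: class_fibre_def)
  obtain x where "x \<in> EAinf N A" "c = aeclass N A B x"
    using connected_components_of_subset[OF C] c by (auto simp: topspace_limit_space)
  then show "piJ c \<in> ECinf N A" using piE_ECinf piJ_aeclass by metis
qed

lemma limit_space_component_point_or_circle:
  assumes B01: "\<forall>i<N. \<forall>j<N. B i j \<in> {0, 1}" and C: "C \<in> connected_components_of (limit_space N A B)"
  shows "(\<exists>p. C = {p}) \<or> subtopology (limit_space N A B) C homeomorphic_space top_of_set (sphere (0::complex) 1)"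
proof -
  obtain c where c: "c \<in> C" using nonempty_connected_components_of[OF C] by blast
  note fibre = connected_component_subset_class_fibre[OF C c]
  have "C \<in> connected_components_of (fibreJ N A B (piJ c))"
    unfolding fibreJ_eq by (rule connected_components_of_subtopology[OF C fibre(1)])
  then have "point_or_circle (subtopology (fibreJ N A B (piJ c)) C)"
    by (rule point_or_circle_component_fibreJ[OF fibre(2) B01])
  moreover have "subtopology (fibreJ N A B (piJ c)) C = subtopology (limit_space N A B) C"
    unfolding fibreJ_eq subtopology_subtopology using fibre(1) by (simp add: Int_absorb1)
  ultimately show ?thesis
    using connected_components_of_subset[OF C] by (simp add: point_or_circle_def Int_absorb1)
qed

lemma fibre_Kv_finite:
  assumes v: "v \<in> ECinf N A" and B01: "\<forall>i<N. \<forall>j<N. B i j \<in> {0, 1}"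
    and "0 < Kv B v \<and> Kv B v < \<infinity>"
  shows "let K = the_enat (Kv B v) in
    homeomorphic_map (fibreJ N A B v)
      (prod_topology (fibreJ N A B ((shift ^^ K) v)) (discrete_topology (Pv N A K v)))
      (split_coord N A B (the_enat (Kv B v)))
    \<and> (\<forall>c \<in> topspace (fibreJ N A B v).
        (if 1 < K
         then split_coord N A B (the_enat (Kv B (shift v))) (sigJ N A B c)
           = (fst (split_coord N A B (the_enat (Kv B v)) c), butlast (snd (split_coord N A B (the_enat (Kv B v)) c)))
         else sigJ N A B c = fst (split_coord N A B (the_enat (Kv B v)) c)))"
proof -
  obtain k where K: "Kv B v = enat (Suc k)"
    using Kv_cases[of B v] assms(3) by auto
  have w: "(shift ^^ Suc k) v \<in> ECinf N A" "Kv B ((shift ^^ Suc k) v) = 0"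
    by (rule ECinf_funpow_shift[OF v], rule Kv_funpow_shift[OF K])
  have "split_coord N A B (the_enat (Kv B (shift v))) (sigJ N A B c)
      = (fst (split_coord N A B (Suc k) c), butlast (snd (split_coord N A B (Suc k) c)))"
    if "0 < k" "c \<in> topspace (fibreJ N A B v)" for c
    using that K Kv_shift_Suc split_coord_sigJ by (cases k) auto
  with K homeomorphic_map_fibre_split[OF v K Hausdorff_fibre_Kv_0[OF w(1) B01 w(2)]]
  show ?thesis by (simp add: Let_def sigJ_eq_split_coord del: funpow.simps)
qed

theorem theorem6p1:
  fixes N :: nat and A :: "nat \<Rightarrow> nat \<Rightarrow> nat" and B :: "nat \<Rightarrow> nat \<Rightarrow> int"
  assumes kp: "katsura_pair N A B"
    and B01: "\<forall>i<N. \<forall>j<N. B i j \<in> {0, 1}"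
    and reg: "regular N A B"
  shows
    "(\<forall>C \<in> connected_components_of (limit_space N A B).
        (\<exists>p. C = {p}) \<or>
        subtopology (limit_space N A B) C homeomorphic_space top_of_set (sphere (0::complex) 1))
   \<and> (\<exists>h. (\<forall>v \<in> ECinf N A. Kv B v = \<infinity> \<longrightarrow>
             homeomorphic_map (fibreJ N A B v) (fibreE N A v) (h v)
             \<and> (\<forall>c \<in> topspace (fibreJ N A B v). h (shift v) (sigJ N A B c) = shift (h v c))))
   \<and> (\<exists>h. (\<forall>v \<in> ECinf N A. Kv B v = 0 \<and> supA A v = \<infinity> \<longrightarrow>
             homeomorphic_map (fibreJ N A B v) (top_of_set (sphere (0::complex) 1)) (h v)
             \<and> (\<forall>c \<in> topspace (fibreJ N A B v).
                  h (shift v) (sigJ N A B c) = (h v c) ^ A (fst (v 0)) (snd (v 0)))))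
   \<and> (\<forall>v \<in> ECinf N A. Kv B v = 0 \<and> supA A v < \<infinity> \<longrightarrow>
             (\<exists>p. topspace (fibreJ N A B v) = {p}))
   \<and> (\<exists>h. (\<forall>v \<in> ECinf N A. 0 < Kv B v \<and> Kv B v < \<infinity> \<longrightarrow>
             (let K = the_enat (Kv B v) in
               homeomorphic_map (fibreJ N A B v)
                 (prod_topology (fibreJ N A B ((shift ^^ K) v)) (discrete_topology (Pv N A K v))) (h v)
               \<and> (\<forall>c \<in> topspace (fibreJ N A B v).
                    (if 1 < K
                     then h (shift v) (sigJ N A B c) = (fst (h v c), butlast (snd (h v c)))
                     else sigJ N A B c = fst (h v c))))))"
proof (intro conjI ballI impI exI[of _ "\<lambda>v. class_rep"] exI[of _ "\<lambda>v. circle_coord A"]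
    exI[of _ "\<lambda>v. split_coord N A B (the_enat (Kv B v))"] fibre_Kv_finite[OF _ B01])
qed (simp_all add: limit_space_component_point_or_circle[OF B01] fibre_singleton[OF _ B01]
    homeomorphic_map_fibre_Kv_infinity class_rep_sigJ_Kv_infinity
    homeomorphic_map_fibre_circle[OF _ B01] circle_coord_sigJ[OF _ B01])

end
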